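(* Let $\mathcal{C}$ be a Conway category and $\mathbf{Q}$ a finite automaton. If the identity $\Gamma(\mathbf{Q})$ holds in $\mathcal{C}$, then so does the identity $\Gamma(M(\mathbf{Q}))$ associated with the monoid $M(\mathbf{Q})$.
   Context: Cartesian categories have chosen finite products (terminal object $T$, projections $\pi_i$, tupling $\langle\cdot\rangle$, $!_A:A\to T$, $f\times g$), strictly associative; composition is written $g\circ f$; $\Delta_{A^n}=\langle 1_A,\ldots,1_A\rangle:A\to A^n$. A dagger operation maps $f:A\times C\to A$ to $f^\dagger:C\to A$. A Conway category is a cartesian category with dagger satisfying: $(f\circ(1_A\times g))^\dagger=f^\dagger\circ g$ ($f:A\times B\to A$, $g:C\to B$); $f^{\dagger\dagger}=(f\circ(\Delta_{A^2}\times 1_C))^\dagger$ ($f:A\times A\times C\to A$); $(f\circ\langle g,\pi_2^{A\times C}\rangle)^\dagger=f\circ\langle (g\circ\langle f,\pi_2^{B\times C}\rangle)^\dagger,1_C\rangle$ ($f:B\times C\to A$, $g:A\times C\to B$). A finite automaton $\mathbf{Q}=(Q,Z,\cdot)$ has finite nonempty state set $Q$, finite nonempty input alphabet $Z$ and action $Q\times Z\to Q$, extended to words; $M(\mathbf{Q})$ is the monoid of functions $Q\to Q$, $q\mapsto qu$, induced by words $u\in Z^*$, with product $u^{\mathbf{Q}}\cdot v^{\mathbf{Q}}=(uv)^{\mathbf{Q}}$. Write $Q=\{q_1,\ldots,q_n\}$, identified with $\{1,\ldots,n\}$, and $Z=\{a_1,\ldots,a_m\}$. For an object $A$ and $i\in[n]$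 let $\rho_i^{\mathbf{Q},A}=\langle\pi^{A^n}_{ia_1},\ldots,\pi^{A^n}_{ia_m}\rangle:A^n\to A^m$ ($ia_j$ is the index of $q_i\cdot a_j$). For $f:A^m\times C\to A$ let $f^{\mathbf{Q},A}:A^n\times C\to A^n$ have components $\pi_i^{A^n}\circ f^{\mathbf{Q},A}=f\circ(\rho_i^{\mathbf{Q},A}\times 1_C)$. The identity $\Gamma(\mathbf{Q})$ holds in $\mathcal{C}$ if $(f^{\mathbf{Q},A})^\dagger=\Delta_{A^n}\circ(f\circ(\Delta_{A^m}\times 1_C))^\dagger$ for all objects $A,C$ and all $f:A^m\times C\to A$. For a finite monoid $M$, $\Gamma(M)$ denotes $\Gamma$ of the automaton $(M,M,\cdot)$ whose action is monoid multiplication. *)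

theory Defs
  imports Main
begin

text \<open>Objects are all elements of type 'o, morphisms all elements of type 'm.
  cmp S g f is the composite g o f (defined when ccod f = cdom g).
  p1 S A B, p2 S A B are the chosen projections of A x B, cpair the tupling,
  bang S A the unique map A to the terminal object trm S.
  dag S A C f is the dagger f^dagger : C -> A of f : A x C -> A.\<close>

record ('o, 'm) cart_dag =
  cdom  :: "'m \<Rightarrow> 'o"
  ccod  :: "'m \<Rightarrow> 'o"
  cmp   :: "'m \<Rightarrow> 'm \<Rightarrow> 'm"
  cid   :: "'o \<Rightarrow> 'm"
  trm   :: "'o"
  cprod :: "'o \<Rightarrow> 'o \<Rightarrow> 'o"
  p1    :: "'o \<Rightarrow> 'o \<Rightarrow> 'm"
  p2    :: "'o \<Rightarrow> 'o \<Rightarrow> 'm"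
  cpair :: "'m \<Rightarrow> 'm \<Rightarrow> 'm"
  bang  :: "'o \<Rightarrow> 'm"
  dag   :: "'o \<Rightarrow> 'o \<Rightarrow> 'm \<Rightarrow> 'm"

definition hom :: "('o, 'm) cart_dag \<Rightarrow> 'm \<Rightarrow> 'o \<Rightarrow> 'o \<Rightarrow> bool" where
  "hom S f A B \<longleftrightarrow> cdom S f = A \<and> ccod S f = B"

definition cartesian_category :: "('o, 'm) cart_dag \<Rightarrow> bool" where
  "cartesian_category S \<longleftrightarrow>
    \<comment> \<open>category\<close>
    (\<forall>A. hom S (cid S A) A A) \<and>
    (\<forall>f g. ccod S f = cdom S g \<longrightarrow> hom S (cmp S g f) (cdom S f) (ccod S g)) \<and>
    (\<forall>f. cmp S f (cid S (cdom S f)) = f \<and> cmp S (cid S (ccod S f)) f = f) \<and>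
    (\<forall>f g h. ccod S f = cdom S g \<and> ccod S g = cdom S h \<longrightarrow>
       cmp S h (cmp S g f) = cmp S (cmp S h g) f) \<and>
    \<comment> \<open>terminal object\<close>
    (\<forall>A. hom S (bang S A) A (trm S)) \<and>
    (\<forall>A f. hom S f A (trm S) \<longrightarrow> f = bang S A) \<and>
    \<comment> \<open>binary products\<close>
    (\<forall>A B. hom S (p1 S A B) (cprod S A B) A \<and> hom S (p2 S A B) (cprod S A B) B) \<and>
    (\<forall>f g. cdom S f = cdom S g \<longrightarrow>
       hom S (cpair S f g) (cdom S f) (cprod S (ccod S f) (ccod S g)) \<and>
       cmp S (p1 S (ccod S f) (ccod S g)) (cpair S f g) = f \<and>
       cmp S (p2 S (ccod S f) (ccod S g)) (cpair S f g) = g) \<and>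
    (\<forall>h C A B. hom S h C (cprod S A B) \<longrightarrow>
       cpair S (cmp S (p1 S A B) h) (cmp S (p2 S A B) h) = h) \<and>
    \<comment> \<open>strict associativity: (A x B) x C = A x (B x C) and the canonical iso is the identity\<close>
    (\<forall>A B C. cprod S (cprod S A B) C = cprod S A (cprod S B C) \<and>
       cpair S (cmp S (p1 S A B) (p1 S (cprod S A B) C))
               (cpair S (cmp S (p2 S A B) (p1 S (cprod S A B) C)) (p2 S (cprod S A B) C))
         = cid S (cprod S A (cprod S B C)))"

definition ctimes :: "('o, 'm) cart_dag \<Rightarrow> 'm \<Rightarrow> 'm \<Rightarrow> 'm" where
  "ctimes S f g = cpair S (cmp S f (p1 S (cdom S f) (cdom S g)))
                          (cmp S g (p2 S (cdom S f) (cdom S g)))"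

definition conway_category :: "('o, 'm) cart_dag \<Rightarrow> bool" where
  "conway_category S \<longleftrightarrow> cartesian_category S \<and>
    (\<forall>A C f. hom S f (cprod S A C) A \<longrightarrow> hom S (dag S A C f) C A) \<and>
    \<comment> \<open>parameter identity\<close>
    (\<forall>A B C f g. hom S f (cprod S A B) A \<and> hom S g C B \<longrightarrow>
       dag S A C (cmp S f (ctimes S (cid S A) g)) = cmp S (dag S A B f) g) \<and>
    \<comment> \<open>double dagger identity\<close>
    (\<forall>A C f. hom S f (cprod S A (cprod S A C)) A \<longrightarrow>
       dag S A C (dag S A (cprod S A C) f) =
       dag S A C (cmp S f (ctimes S (cpair S (cid S A) (cid S A)) (cid S C)))) \<and>
    \<comment> \<open>composition identity\<close>
    (\<forall>A B C f g. hom S f (cprod S B C) A \<and> hom S g (cprod S A C) B \<longrightarrow>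
       dag S A C (cmp S f (cpair S g (p2 S A C))) =
       cmp S f (cpair S (dag S B C (cmp S g (cpair S f (p2 S B C)))) (cid S C)))"

fun cpow :: "('o, 'm) cart_dag \<Rightarrow> 'o \<Rightarrow> nat \<Rightarrow> 'o" where
  "cpow S A 0 = trm S"
| "cpow S A (Suc 0) = A"
| "cpow S A (Suc (Suc k)) = cprod S A (cpow S A (Suc k))"

text \<open>nproj S A n i is the projection A^n -> A onto the (i+1)-th factor (0-based i < n).\<close>
fun nproj :: "('o, 'm) cart_dag \<Rightarrow> 'o \<Rightarrow> nat \<Rightarrow> nat \<Rightarrow> 'm" where
  "nproj S A 0 i = undefined"
| "nproj S A (Suc 0) i = cid S A"
| "nproj S A (Suc (Suc k)) i =
     (if i = 0 then p1 S A (cpow S A (Suc k))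
      else cmp S (nproj S A (Suc k) (i - 1)) (p2 S A (cpow S A (Suc k))))"

fun ntuple :: "('o, 'm) cart_dag \<Rightarrow> 'm list \<Rightarrow> 'm" where
  "ntuple S [] = undefined"
| "ntuple S [f] = f"
| "ntuple S (f # g # fs) = cpair S f (ntuple S (g # fs))"

definition cdiag :: "('o, 'm) cart_dag \<Rightarrow> 'o \<Rightarrow> nat \<Rightarrow> 'm" where
  "cdiag S A n = ntuple S (replicate n (cid S A))"

text \<open>A finite automaton with states {0..<n} (q_{i+1} is i) and letters {0..<m}
  (a_{j+1} is j); delta i j is the index of q_i . a_j.\<close>
definition automaton :: "nat \<Rightarrow> nat \<Rightarrow> (nat \<Rightarrow> nat \<Rightarrow> nat) \<Rightarrow> bool" where
  "automaton n m \<delta> \<longleftrightarrow> 0 < n \<and> 0 < m \<and> (\<forall>i<n. \<forall>j<m. \<delta> i j < n)"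

definition rho :: "('o, 'm) cart_dag \<Rightarrow> nat \<Rightarrow> nat \<Rightarrow> (nat \<Rightarrow> nat \<Rightarrow> nat) \<Rightarrow> 'o \<Rightarrow> nat \<Rightarrow> 'm" where
  "rho S n m \<delta> A i = ntuple S (map (\<lambda>j. nproj S A n (\<delta> i j)) [0..<m])"

definition fQ :: "('o, 'm) cart_dag \<Rightarrow> nat \<Rightarrow> nat \<Rightarrow> (nat \<Rightarrow> nat \<Rightarrow> nat) \<Rightarrow> 'o \<Rightarrow> 'o \<Rightarrow> 'm \<Rightarrow> 'm" where
  "fQ S n m \<delta> A C f =
     ntuple S (map (\<lambda>i. cmp S f (ctimes S (rho S n m \<delta> A i) (cid S C))) [0..<n])"

definition Gamma :: "('o, 'm) cart_dag \<Rightarrow> nat \<Rightarrow> nat \<Rightarrow> (nat \<Rightarrow> nat \<Rightarrow> nat) \<Rightarrow> bool" where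
  "Gamma S n m \<delta> \<longleftrightarrow>
     (\<forall>A C f. hom S f (cprod S (cpow S A m) C) A \<longrightarrow>
        dag S (cpow S A n) C (fQ S n m \<delta> A C f) =
        cmp S (cdiag S A n) (dag S A C (cmp S f (ctimes S (cdiag S A m) (cid S C)))))"

definition word_trans :: "nat \<Rightarrow> (nat \<Rightarrow> nat \<Rightarrow> nat) \<Rightarrow> nat list \<Rightarrow> nat \<Rightarrow> nat" where
  "word_trans n \<delta> w = (\<lambda>q. if q < n then foldl \<delta> q w else q)"

definition trans_monoid :: "nat \<Rightarrow> nat \<Rightarrow> (nat \<Rightarrow> nat \<Rightarrow> nat) \<Rightarrow> (nat \<Rightarrow> nat) set" where
  "trans_monoid n m \<delta> = {word_trans n \<delta> w | w. set w \<subseteq> {0..<m}}"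

text \<open>Product u^Q . v^Q = (uv)^Q, i.e. first u then v: as functions v^Q o u^Q.\<close>
definition tm_mult :: "(nat \<Rightarrow> nat) \<Rightarrow> (nat \<Rightarrow> nat) \<Rightarrow> (nat \<Rightarrow> nat)" where
  "tm_mult s t = t \<circ> s"

end

theory Submission
  imports Defs
begin

text \<open>The transition monoid \<open>M(\<mathbf>Q)\<close> is, up to isomorphism, a subautomaton of an
  automaton built from \<open>\<mathbf>Q\<close> by closure operations under which the identities \<open>\<Gamma>\<close>
  are preserved. Take the direct power \<open>\<mathbf>Q\<^sup>n\<close>, whose states are the maps
  \<open>Q \<rightarrow> Q\<close>, and replace its letters by words, one word \<open>u\<close> for every element \<open>u\<^sup>Q\<close> of the monoid;
  then \<open>u\<^sup>Q\<close> is the state reached from the identity map, and the states of this form make up a copy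
  of the automaton \<open>(M(\<mathbf>Q), M(\<mathbf>Q), \<cdot>)\<close>. That \<open>\<Gamma>\<close> survives direct products, renaming and
  duplication of letters, adjoining the empty word and two-letter words, and passage to subautomata
  is shown by equational reasoning in the Conway category, the key tool being a generalised
  Bekic identity that removes variables which are either irrelevant or mere copies.\<close>

section \<open>Transition functions, words and state codings\<close>

lemma mult_add_less: "a < m \<Longrightarrow> j < (p::nat) \<Longrightarrow> a * p + j < m * p"
proof -
  assume "a < m" "j < p"
  then have "a * p + p \<le> m * p" by (metis add.commute mult_Suc less_eq_Suc_le mult_le_mono1)
  then show ?thesis using \<open>j < p\<close> by linarith
qed

lemma div_mod_mult_add: "c < (p::nat) \<Longrightarrow> (x * p + c) div p = x \<and> (x * p + c) mod p = c"
  by simp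

lemma extend_to_permutation:
  assumes inj: "inj_on \<alpha> {..<p}" and rng: "\<forall>i<p. \<alpha> i < (N::nat)"
  obtains \<pi> \<pi>i where "\<forall>i<N. \<pi> i < N" "\<forall>i<p. \<pi> i = \<alpha> i"
    "\<forall>j<N. \<pi>i j < N \<and> \<pi> (\<pi>i j) = j" "\<forall>i<N. \<pi>i (\<pi> i) = i"
proof -
  define xs where "xs = map \<alpha> [0..<p] @ filter (\<lambda>j. j \<notin> \<alpha> ` {..<p}) [0..<N]"
  have d: "distinct xs" unfolding xs_def using inj
    by (auto simp: distinct_map lessThan_atLeast0)
  have s: "set xs = {..<N}" unfolding xs_def using rng by auto
  have l: "length xs = N" using distinct_card[OF d] s by simp
  have b: "bij_betw ((!) xs) {..<N} {..<N}" using bij_betw_nth[OF d] l s by simp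
  define \<pi> where "\<pi> = (!) xs"
  define \<pi>i where "\<pi>i = the_inv_into {..<N} \<pi>"
  have inj\<pi>: "inj_on \<pi> {..<N}" using b by (simp add: bij_betw_def \<pi>_def)
  have im: "\<pi> ` {..<N} = {..<N}" using b by (simp add: bij_betw_def \<pi>_def)
  show ?thesis
  proof
    show "\<forall>i<N. \<pi> i < N" using im by auto
    show "\<forall>i<p. \<pi> i = \<alpha> i" unfolding \<pi>_def xs_def by (auto simp: nth_append)
    show "\<forall>j<N. \<pi>i j < N \<and> \<pi> (\<pi>i j) = j" unfolding \<pi>i_def
      using the_inv_into_into[OF inj\<pi>] f_the_inv_into_f[OF inj\<pi>] im by auto
    show "\<forall>i<N. \<pi>i (\<pi> i) = i" unfolding \<pi>i_def using the_inv_into_f_f[OF inj\<pi>] by auto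
  qed
qed

definition trans_closed :: "nat \<Rightarrow> nat \<Rightarrow> (nat \<Rightarrow> nat \<Rightarrow> nat) \<Rightarrow> bool" where
  "trans_closed n m \<delta> \<longleftrightarrow> (\<forall>i<n. \<forall>j<m. \<delta> i j < n)"

lemma foldl_trans_closed: "trans_closed N m \<tau> \<Longrightarrow> I < N \<Longrightarrow> set w \<subseteq> {..<m} \<Longrightarrow> foldl \<tau> I w < N"
  by (induction w arbitrary: I) (auto simp: trans_closed_def)

lemma trans_closed_product:
  assumes "trans_closed n m \<delta>" "trans_closed p m \<epsilon>" "0 < p"
  shows "trans_closed (n * p) m (\<lambda>I a. \<delta> (I div p) a * p + \<epsilon> (I mod p) a)"
  unfolding trans_closed_def
proof (intro allI impI)
  fix I a assume I: "I < n * p" and a: "a < m"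
  have "I div p < n" using I assms(3) by (simp add: div_less_iff_less_mult)
  then have "\<delta> (I div p) a < n" using assms(1) a by (simp add: trans_closed_def)
  moreover have "\<epsilon> (I mod p) a < p" using assms(2,3) a by (simp add: trans_closed_def)
  ultimately show "\<delta> (I div p) a * p + \<epsilon> (I mod p) a < n * p" by (rule mult_add_less)
qed

lemma trans_closed_letter_pairs:
  assumes R: "trans_closed n (m1 + m2) \<delta>" and m20: "0 < m2"
  shows "trans_closed n (m1 + m1 * m2)
    (\<lambda>i j. if j < m1 then \<delta> i j else \<delta> (\<delta> i ((j - m1) div m2)) (m1 + (j - m1) mod m2))"
  unfolding trans_closed_def
proof (intro allI impI)
  fix q a assume q: "q < n" and a: "a < m1 + m1 * m2"
  show "(if a < m1 then \<delta> q a else \<delta> (\<delta> q ((a - m1) div m2)) (m1 + (a - m1) mod m2)) < n"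
  proof (cases "a < m1")
    case True then show ?thesis using R q by (simp add: trans_closed_def)
  next
    case False
    have "a - m1 < m1 * m2" using a False by simp
    then have "(a - m1) div m2 < m1" using m20 by (simp add: div_less_iff_less_mult mult.commute)
    then have "\<delta> q ((a - m1) div m2) < n" using R q by (simp add: trans_closed_def)
    moreover have "m1 + (a - m1) mod m2 < m1 + m2" using m20 by simp
    ultimately show ?thesis using R False by (simp add: trans_closed_def)
  qed
qed

fun digits_val :: "nat \<Rightarrow> nat list \<Rightarrow> nat" where
  "digits_val n [] = 0"
| "digits_val n (q # qs) = q * n ^ length qs + digits_val n qs"

lemma digits_val_less: "\<forall>q\<in>set qs. q < n \<Longrightarrow> digits_val n qs < n ^ length qs"
proof (induction qs)
  case Nil then show ?case by simp
next
  case (Cons q qs)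
  then have "digits_val n qs < n ^ length qs" "q < n" by auto
  then show ?case
    using mult_add_less[of q n "digits_val n qs" "n ^ length qs"] by (simp add: mult.commute)
qed

lemma digits_val_inj:
  "length xs = length ys \<Longrightarrow> \<forall>q\<in>set xs. q < n \<Longrightarrow> \<forall>q\<in>set ys. q < n \<Longrightarrow>
   digits_val n xs = digits_val n ys \<Longrightarrow> xs = ys"
proof (induction xs arbitrary: ys)
  case Nil then show ?case by simp
next
  case (Cons x xs)
  then obtain y ys' where ys: "ys = y # ys'" by (cases ys) auto
  have l: "length xs = length ys'" using Cons.prems ys by simp
  have e1: "digits_val n xs < n ^ length xs" using Cons.prems by (intro digits_val_less) auto
  have e2: "digits_val n ys' < n ^ length xs"
    using Cons.prems ys l by (intro digits_val_less[of ys' n, simplified l[symmetric]]) auto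
  have eq: "x * n ^ length xs + digits_val n xs = y * n ^ length xs + digits_val n ys'"
    using Cons.prems ys l by simp
  have "x = y" and "digits_val n xs = digits_val n ys'"
    using div_mod_mult_add[OF e1, of x] div_mod_mult_add[OF e2, of y] eq by metis+
  then show ?case using Cons.IH[of ys'] Cons.prems ys l by auto
qed

text \<open>\<open>pow_trans n \<delta> j\<close> is the transition function of the direct power of \<open>\<delta>\<close> with
  \<open>j + 1\<close> factors, a tuple of states being coded by \<open>digits_val n\<close>.\<close>
fun pow_trans :: "nat \<Rightarrow> (nat \<Rightarrow> nat \<Rightarrow> nat) \<Rightarrow> nat \<Rightarrow> nat \<Rightarrow> nat \<Rightarrow> nat" where
  "pow_trans n \<delta> 0 = \<delta>"
| "pow_trans n \<delta> (Suc j) = (\<lambda>I a. \<delta> (I div n ^ Suc j) a * n ^ Suc j + pow_trans n \<delta> j (I mod n ^ Suc j) a)"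

lemma pow_trans_digits_val:
  "length qs = Suc j \<Longrightarrow> \<forall>q\<in>set qs. q < n \<Longrightarrow> a < m \<Longrightarrow> trans_closed n m \<delta> \<Longrightarrow>
   pow_trans n \<delta> j (digits_val n qs) a = digits_val n (map (\<lambda>q. \<delta> q a) qs)"
proof (induction j arbitrary: qs)
  case 0 then show ?case by (cases qs) auto
next
  case (Suc j)
  then obtain q qs' where qs: "qs = q # qs'" by (cases qs) auto
  have l: "length qs' = Suc j" using Suc.prems qs by simp
  have e: "digits_val n qs' < n ^ Suc j" using Suc.prems qs digits_val_less[of qs' n] l by auto
  have "digits_val n qs = q * n ^ Suc j + digits_val n qs'" using qs l by simp
  then have d: "digits_val n qs div n ^ Suc j = q" "digits_val n qs mod n ^ Suc j = digits_val n qs'"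
    using div_mod_mult_add[OF e] by auto
  show ?case using d Suc.IH[OF l] Suc.prems qs l by simp
qed

lemma pow_trans_closed: "trans_closed n m \<delta> \<Longrightarrow> 0 < n \<Longrightarrow> trans_closed (n ^ Suc j) m (pow_trans n \<delta> j)"
proof (induction j)
  case 0 then show ?case by simp
next
  case (Suc j)
  have "0 < n ^ Suc j" using Suc.prems(2) by simp
  from trans_closed_product[OF Suc.prems(1) Suc.IH[OF Suc.prems] this]
  show ?case by (simp only: pow_trans.simps power_Suc[of n "Suc j"])
qed

lemma foldl_pow_trans:
  "length qs = Suc j \<Longrightarrow> \<forall>q\<in>set qs. q < n \<Longrightarrow> set w \<subseteq> {..<m} \<Longrightarrow> trans_closed n m \<delta> \<Longrightarrow>
   foldl (pow_trans n \<delta> j) (digits_val n qs) w = digits_val n (map (\<lambda>q. foldl \<delta> q w) qs)"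
proof (induction w arbitrary: qs)
  case Nil then show ?case by simp
next
  case (Cons a w)
  have "foldl (pow_trans n \<delta> j) (digits_val n qs) (a # w) = foldl (pow_trans n \<delta> j) (digits_val n (map (\<lambda>q. \<delta> q a) qs)) w"
    using pow_trans_digits_val[OF Cons.prems(1) Cons.prems(2), of a m \<delta>] Cons.prems by simp
  also have "\<dots> = digits_val n (map (\<lambda>q. foldl \<delta> q w) (map (\<lambda>q. \<delta> q a) qs))"
    using Cons.IH[of "map (\<lambda>q. \<delta> q a) qs"] Cons.prems by (auto simp: trans_closed_def)
  finally show ?case by (simp add: comp_def)
qed

text \<open>\<open>word_enum m L\<close> enumerates the nonempty words of length at most \<open>L + 1\<close> over
  \<open>{..<m}\<close> by the indices below \<open>num_words m L\<close>: the first \<open>m\<close> indices are the letters, the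
  index \<open>m + a * num_words m L + j\<close> is the letter \<open>a\<close> followed by the \<open>j\<close>-th shorter word.\<close>
fun num_words :: "nat \<Rightarrow> nat \<Rightarrow> nat" where
  "num_words m 0 = m"
| "num_words m (Suc L) = m + m * num_words m L"

fun word_enum :: "nat \<Rightarrow> nat \<Rightarrow> nat \<Rightarrow> nat list" where
  "word_enum m 0 j = [j]"
| "word_enum m (Suc L) j =
     (if j < m then [j] else ((j - m) div num_words m L) # word_enum m L ((j - m) mod num_words m L))"

lemma num_words_ge: "m \<le> num_words m L" by (induction L) auto

lemma word_enum_letter: "j < m \<Longrightarrow> word_enum m L j = [j]" by (cases L) auto

lemma word_enum_set: "0 < m \<Longrightarrow> j < num_words m L \<Longrightarrow> set (word_enum m L j) \<subseteq> {..<m}"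
proof (induction L arbitrary: j)
  case 0 then show ?case by simp
next
  case (Suc L)
  show ?case
  proof (cases "j < m")
    case False
    have c0: "0 < num_words m L" using num_words_ge[of m L] Suc.prems by simp
    have "j - m < m * num_words m L" using Suc.prems False by simp
    then have "(j - m) div num_words m L < m" using c0 by (simp add: div_less_iff_less_mult)
    then show ?thesis using Suc.IH[of "(j - m) mod num_words m L"] c0 Suc.prems False by simp
  qed simp
qed

lemma word_enum_surj:
  "w \<noteq> [] \<Longrightarrow> set w \<subseteq> {..<m} \<Longrightarrow> length w \<le> Suc L \<Longrightarrow> \<exists>j<num_words m L. word_enum m L j = w"
proof (induction L arbitrary: w)
  case 0
  then obtain a where "w = [a]" by (cases w) auto
  then show ?case using 0 by auto
next
  case (Suc L)
  then obtain a w' where w: "w = a # w'" by (cases w) auto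
  show ?case
  proof (cases "w' = []")
    case True then show ?thesis
      using w Suc.prems num_words_ge[of m "Suc L"]
      by (intro exI[of _ a]) (auto simp: word_enum_letter)
  next
    case False
    obtain j' where j': "j' < num_words m L" "word_enum m L j' = w'"
      using Suc.IH[OF False] Suc.prems w by auto
    have a: "a < m" using Suc.prems w by simp
    define j where "j = m + (a * num_words m L + j')"
    have lt: "a * num_words m L + j' < m * num_words m L" using mult_add_less[OF a j'(1)] .
    have "(j - m) div num_words m L = a" "(j - m) mod num_words m L = j'"
      using div_mod_mult_add[OF j'(1)] by (auto simp: j_def)
    then have "word_enum m (Suc L) j = w" using w j' by (simp add: j_def)
    moreover have "j < num_words m (Suc L)" using lt by (simp add: j_def)
    ultimately show ?thesis by blast
  qed
qed

lemma word_trans_lt: "automaton n m \<delta> \<Longrightarrow> set w \<subseteq> {0..<m} \<Longrightarrow> q < n \<Longrightarrow> word_trans n \<delta> w q < n"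
  using foldl_trans_closed[of n m \<delta> q w]
  by (auto simp: word_trans_def automaton_def trans_closed_def atLeast0LessThan)

lemma word_trans_append:
  assumes "automaton n m \<delta>" "set w1 \<subseteq> {0..<m}"
  shows "word_trans n \<delta> w2 \<circ> word_trans n \<delta> w1 = word_trans n \<delta> (w1 @ w2)"
proof
  fix q
  show "(word_trans n \<delta> w2 \<circ> word_trans n \<delta> w1) q = word_trans n \<delta> (w1 @ w2) q"
  proof (cases "q < n")
    case True
    have "foldl \<delta> q w1 < n" using word_trans_lt[OF assms True] True by (simp add: word_trans_def)
    then show ?thesis using True by (simp add: word_trans_def)
  qed (simp add: word_trans_def)
qed

lemma trans_monoid_lt: "automaton n m \<delta> \<Longrightarrow> f \<in> trans_monoid n m \<delta> \<Longrightarrow> q < n \<Longrightarrow> f q < n"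
  unfolding trans_monoid_def using word_trans_lt by blast

lemma trans_monoid_fixes: "f \<in> trans_monoid n m \<delta> \<Longrightarrow> \<not> q < n \<Longrightarrow> f q = q"
  by (auto simp: trans_monoid_def word_trans_def)

lemma trans_monoid_nonempty: "trans_monoid n m \<delta> \<noteq> {}"
  unfolding trans_monoid_def
  by (metis (mono_tags, lifting) empty_iff empty_set empty_subsetI mem_Collect_eq)

lemma bij_trans_monoid_pos: "bij_betw e {0..<k} (trans_monoid n m \<delta>) \<Longrightarrow> 0 < (k::nat)"
  using trans_monoid_nonempty by (fastforce simp: bij_betw_def)

lemma tm_mult_closed:
  assumes "automaton n m \<delta>" "f \<in> trans_monoid n m \<delta>" "g \<in> trans_monoid n m \<delta>"
  shows "tm_mult f g \<in> trans_monoid n m \<delta>"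
proof -
  obtain u v where "f = word_trans n \<delta> u" "g = word_trans n \<delta> v" "set u \<subseteq> {0..<m}" "set v \<subseteq> {0..<m}"
    using assms(2,3) by (auto simp: trans_monoid_def)
  then have "tm_mult f g = word_trans n \<delta> (u @ v) \<and> set (u @ v) \<subseteq> {0..<m}"
    using word_trans_append[OF assms(1)] by (simp add: tm_mult_def)
  then show ?thesis unfolding trans_monoid_def by blast
qed

definition state_map_code :: "nat \<Rightarrow> (nat \<Rightarrow> nat) \<Rightarrow> nat" where
  "state_map_code n f = digits_val n (map f [0..<n])"

lemma state_map_code_less: "(\<And>q. q < n \<Longrightarrow> f q < n) \<Longrightarrow> state_map_code n f < n ^ n"
  using digits_val_less[of "map f [0..<n]" n] by (auto simp: state_map_code_def)

lemma state_map_code_inj: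
  assumes "automaton n m \<delta>"
  shows "inj_on (state_map_code n) (trans_monoid n m \<delta>)"
proof (rule inj_onI)
  fix f g assume f: "f \<in> trans_monoid n m \<delta>" and g: "g \<in> trans_monoid n m \<delta>"
    and eq: "state_map_code n f = state_map_code n g"
  have "map f [0..<n] = map g [0..<n]"
    using digits_val_inj[of "map f [0..<n]" "map g [0..<n]" n] eq
      trans_monoid_lt[OF assms f] trans_monoid_lt[OF assms g]
    by (auto simp: state_map_code_def)
  then have "\<forall>q<n. f q = g q" by (simp add: map_eq_conv)
  then show "f = g"
    using trans_monoid_fixes[OF f] trans_monoid_fixes[OF g] by (intro ext) (case_tac "x < n", auto)
qed

lemma foldl_pow_trans_state_map_code:
  assumes "automaton n m \<delta>" "set w \<subseteq> {0..<m}" "\<And>q. q < n \<Longrightarrow> f q < n"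
  shows "foldl (pow_trans n \<delta> (n - 1)) (state_map_code n f) w = state_map_code n (word_trans n \<delta> w \<circ> f)"
proof -
  have "n = Suc (n - 1)" and closed: "trans_closed n m \<delta>"
    using assms(1) by (auto simp: automaton_def trans_closed_def)
  then have "foldl (pow_trans n \<delta> (n - 1)) (state_map_code n f) w = digits_val n (map (\<lambda>q. foldl \<delta> q w) (map f [0..<n]))"
    unfolding state_map_code_def using assms(2,3) by (intro foldl_pow_trans) auto
  also have "\<dots> = state_map_code n (word_trans n \<delta> w \<circ> f)"
    using assms(3)
    unfolding state_map_code_def word_trans_def by (intro arg_cong[where f="digits_val n"]) auto
  finally show ?thesis .
qed

lemma bij_trans_monoid_mult:
  fixes e :: "nat \<Rightarrow> nat \<Rightarrow> nat"
  assumes aut: "automaton n m \<delta>" and e: "bij_betw e {0..<k} (trans_monoid n m \<delta>)" and "s < k" "t < k"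
  shows "the_inv_into {0..<k} e (tm_mult (e s) (e t)) < k"
    and "e (the_inv_into {0..<k} e (tm_mult (e s) (e t))) = e t \<circ> e s"
proof -
  have "e s \<in> trans_monoid n m \<delta>" using assms(3) by (intro bij_betwE[OF e, rule_format]) simp
  moreover have "e t \<in> trans_monoid n m \<delta>"
    using assms(4) by (intro bij_betwE[OF e, rule_format]) simp
  ultimately have mem: "tm_mult (e s) (e t) \<in> e ` {0..<k}"
    using tm_mult_closed[OF aut] e by (simp add: bij_betw_def)
  have inj: "inj_on e {0..<k}" using e by (simp add: bij_betw_def)
  show "the_inv_into {0..<k} e (tm_mult (e s) (e t)) < k"
    using the_inv_into_into[OF inj mem subset_refl] by simp
  show "e (the_inv_into {0..<k} e (tm_mult (e s) (e t))) = e t \<circ> e s"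
    using f_the_inv_into_f[OF inj mem] by (simp add: tm_mult_def)
qed

section \<open>Conway categories\<close>

locale conway =
  fixes S :: "('o,'m) cart_dag"
  assumes conway: "conway_category S"
begin

abbreviation dm where "dm f \<equiv> cdom S f"
abbreviation cd where "cd f \<equiv> ccod S f"
abbreviation cm (infixl "\<cdot>" 60) where "g \<cdot> f \<equiv> cmp S g f"
abbreviation idm where "idm A \<equiv> cid S A"
abbreviation pr (infixr "\<otimes>" 70) where "A \<otimes> B \<equiv> cprod S A B"
abbreviation pr1 where "pr1 A B \<equiv> p1 S A B"
abbreviation pr2 where "pr2 A B \<equiv> p2 S A B"
abbreviation pair where "pair f g \<equiv> cpair S f g"
abbreviation cross where "cross f g \<equiv> ctimes S f g"
abbreviation dagger where "dagger A C f \<equiv> dag S A C f"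

lemma cartesian: "cartesian_category S" using conway unfolding conway_category_def by blast

lemma idm_ty[simp]: "dm (idm A) = A" "cd (idm A) = A"
  using cartesian unfolding cartesian_category_def hom_def by auto

lemma comp_ty[simp]: "cd f = dm g \<Longrightarrow> dm (g \<cdot> f) = dm f"  "cd f = dm g \<Longrightarrow> cd (g \<cdot> f) = cd g"
  using cartesian unfolding cartesian_category_def hom_def by auto

lemma comp_idm_right[simp]: "dm f = A \<Longrightarrow> f \<cdot> idm A = f"
  using cartesian unfolding cartesian_category_def hom_def by auto
lemma comp_idm_left[simp]: "cd f = A \<Longrightarrow> idm A \<cdot> f = f"
  using cartesian unfolding cartesian_category_def hom_def by auto

lemma comp_assoc[simp]: "cd f = dm g \<Longrightarrow> cd g = dm h \<Longrightarrow> h \<cdot> (g \<cdot> f) = h \<cdot> g \<cdot> f"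
  using cartesian unfolding cartesian_category_def hom_def by auto

lemma pr_ty[simp]:
  "dm (pr1 A B) = A \<otimes> B" "cd (pr1 A B) = A" "dm (pr2 A B) = A \<otimes> B" "cd (pr2 A B) = B"
  using cartesian unfolding cartesian_category_def hom_def by auto

lemma pair_ty[simp]:
  "dm f = dm g \<Longrightarrow> dm (pair f g) = dm f" "dm f = dm g \<Longrightarrow> cd (pair f g) = cd f \<otimes> cd g"
  using cartesian unfolding cartesian_category_def hom_def by auto

lemma pr1_pair[simp]: "dm f = dm g \<Longrightarrow> cd f = A \<Longrightarrow> cd g = B \<Longrightarrow> pr1 A B \<cdot> pair f g = f"
  using cartesian unfolding cartesian_category_def hom_def by auto
lemma pr2_pair[simp]: "dm f = dm g \<Longrightarrow> cd f = A \<Longrightarrow> cd g = B \<Longrightarrow> pr2 A B \<cdot> pair f g = g"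
  using cartesian unfolding cartesian_category_def hom_def by auto

lemma pair_eta: "cd h = A \<otimes> B \<Longrightarrow> pair (pr1 A B \<cdot> h) (pr2 A B \<cdot> h) = h"
  using cartesian unfolding cartesian_category_def hom_def by metis

lemma prod_obj_assoc[simp]: "(A \<otimes> B) \<otimes> C = A \<otimes> (B \<otimes> C)"
  using cartesian unfolding cartesian_category_def hom_def by auto

lemma pair_pr_assoc:
  "pair (pr1 A B \<cdot> pr1 (A \<otimes> B) C) (pair (pr2 A B \<cdot> pr1 (A \<otimes> B) C) (pr2 (A \<otimes> B) C)) = idm (A \<otimes> (B \<otimes> C))"
  using cartesian unfolding cartesian_category_def hom_def by auto

lemma pair_ext:
  "cd h = A \<otimes> B \<Longrightarrow> cd k = A \<otimes> B \<Longrightarrow> pr1 A B \<cdot> h = pr1 A B \<cdot> k \<Longrightarrow> pr2 A B \<cdot> h = pr2 A B \<cdot> k \<Longrightarrow> h = k"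
  by (metis pair_eta)

lemma pair_comp[simp]: "dm f = dm g \<Longrightarrow> cd k = dm f \<Longrightarrow> pair f g \<cdot> k = pair (f \<cdot> k) (g \<cdot> k)"
proof -
  assume a: "dm f = dm g" "cd k = dm f"
  have t: "cd (pair f g \<cdot> k) = cd f \<otimes> cd g" using a by simp
  have "pair (pr1 (cd f) (cd g) \<cdot> (pair f g \<cdot> k)) (pr2 (cd f) (cd g) \<cdot> (pair f g \<cdot> k)) = pair f g \<cdot> k"
    by (rule pair_eta[OF t])
  moreover have "pr1 (cd f) (cd g) \<cdot> (pair f g \<cdot> k) = f \<cdot> k" using a by (subst comp_assoc) auto
  moreover have "pr2 (cd f) (cd g) \<cdot> (pair f g \<cdot> k) = g \<cdot> k" using a by (subst comp_assoc) auto
  ultimately show ?thesis by simp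
qed

lemma pr1_pair'[simp]:
  "dm f = dm g \<Longrightarrow> cd f = A \<Longrightarrow> cd g = B \<Longrightarrow> dm h = A \<Longrightarrow> h \<cdot> pr1 A B \<cdot> pair f g = h \<cdot> f"
  by (subst comp_assoc[symmetric]) auto
lemma pr2_pair'[simp]:
  "dm f = dm g \<Longrightarrow> cd f = A \<Longrightarrow> cd g = B \<Longrightarrow> dm h = B \<Longrightarrow> h \<cdot> pr2 A B \<cdot> pair f g = h \<cdot> g"
  by (subst comp_assoc[symmetric]) auto
lemma pair_comp'[simp]:
  "dm f = dm g \<Longrightarrow> cd k = dm f \<Longrightarrow> dm h = cd f \<otimes> cd g \<Longrightarrow> h \<cdot> pair f g \<cdot> k = h \<cdot> pair (f \<cdot> k) (g \<cdot> k)"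
  by (subst comp_assoc[symmetric]) auto
lemma pair_pr: "pair (pr1 A B) (pr2 A B) = idm (A \<otimes> B)"
  using pair_eta[of "idm (A \<otimes> B)" A B] by simp

lemma pair_assoc[simp]: "dm a = dm b \<Longrightarrow> dm b = dm c \<Longrightarrow> pair (pair a b) c = pair a (pair b c)"
proof -
  assume h: "dm a = dm b" "dm b = dm c"
  let ?A = "cd a" and ?B = "cd b" and ?C = "cd c"
  have "pair (pair a b) c = idm (?A \<otimes> (?B \<otimes> ?C)) \<cdot> pair (pair a b) c" using h by simp
  also have "\<dots> = pair (pr1 ?A ?B \<cdot> pr1 (?A \<otimes> ?B) ?C) (pair (pr2 ?A ?B \<cdot> pr1 (?A \<otimes> ?B) ?C) (pr2 (?A \<otimes> ?B) ?C)) \<cdot> pair (pair a b) c"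
    by (simp add: pair_pr_assoc)
  also have "\<dots> = pair a (pair b c)" using h by (simp del: prod_obj_assoc)
  finally show ?thesis .
qed

lemma pr1_pair_pair[simp]: "dm a = dm b \<Longrightarrow> dm b = dm c \<Longrightarrow> cd a = A \<Longrightarrow> cd b = B \<Longrightarrow> cd c = C \<Longrightarrow>
   pr1 (A \<otimes> B) C \<cdot> pair a (pair b c) = pair a b"
  by (metis pair_assoc pr1_pair pair_ty(1) pair_ty(2))
lemma pr2_pair_pair[simp]: "dm a = dm b \<Longrightarrow> dm b = dm c \<Longrightarrow> cd a = A \<Longrightarrow> cd b = B \<Longrightarrow> cd c = C \<Longrightarrow>
   pr2 (A \<otimes> B) C \<cdot> pair a (pair b c) = c"
  by (metis pair_assoc pr2_pair pair_ty(1) pair_ty(2))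
lemma pr1_pair_pair'[simp]:
  "dm a = dm b \<Longrightarrow> dm b = dm c \<Longrightarrow> cd a = A \<Longrightarrow> cd b = B \<Longrightarrow> cd c = C \<Longrightarrow> dm h = A \<otimes> B \<Longrightarrow>
   h \<cdot> pr1 (A \<otimes> B) C \<cdot> pair a (pair b c) = h \<cdot> pair a b"
  by (subst comp_assoc[symmetric]) auto
lemma pr2_pair_pair'[simp]: "dm a = dm b \<Longrightarrow> dm b = dm c \<Longrightarrow> cd a = A \<Longrightarrow> cd b = B \<Longrightarrow> cd c = C \<Longrightarrow> dm h = C \<Longrightarrow>
   h \<cdot> pr2 (A \<otimes> B) C \<cdot> pair a (pair b c) = h \<cdot> c"
  by (subst comp_assoc[symmetric]) auto

lemma cross_def': "cross f g = pair (f \<cdot> pr1 (dm f) (dm g)) (g \<cdot> pr2 (dm f) (dm g))"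
  by (simp add: ctimes_def)

lemma cross_ty[simp]: "dm (cross f g) = dm f \<otimes> dm g" "cd (cross f g) = cd f \<otimes> cd g"
  by (simp_all add: cross_def')

lemma cross_pair[simp]:
  "dm a = dm b \<Longrightarrow> cd a = dm f \<Longrightarrow> cd b = dm g \<Longrightarrow> cross f g \<cdot> pair a b = pair (f \<cdot> a) (g \<cdot> b)"
  by (simp add: cross_def')
lemma cross_pair'[simp]: "dm a = dm b \<Longrightarrow> cd a = dm f \<Longrightarrow> cd b = dm g \<Longrightarrow> dm h = cd f \<otimes> cd g \<Longrightarrow>
   h \<cdot> cross f g \<cdot> pair a b = h \<cdot> pair (f \<cdot> a) (g \<cdot> b)"
  by (subst comp_assoc[symmetric]) auto

lemma cross_cross[simp]:
  "cd f' = dm f \<Longrightarrow> cd g' = dm g \<Longrightarrow> cross f g \<cdot> cross f' g' = cross (f \<cdot> f') (g \<cdot> g')"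
  by (simp add: cross_def'[of "f \<cdot> f'" "g \<cdot> g'"] cross_def'[of f' g'])
lemma cross_cross'[simp]:
  "cd f' = dm f \<Longrightarrow> cd g' = dm g \<Longrightarrow> dm h = cd f \<otimes> cd g \<Longrightarrow>
   h \<cdot> cross f g \<cdot> cross f' g' = h \<cdot> cross (f \<cdot> f') (g \<cdot> g')"
  by (subst comp_assoc[symmetric]) auto

lemma cross_pair_pair[simp]: "dm a = dm b \<Longrightarrow> dm b = dm c \<Longrightarrow> dm f = cd a \<otimes> cd b \<Longrightarrow> dm g = cd c \<Longrightarrow>
  cross f g \<cdot> pair a (pair b c) = pair (f \<cdot> pair a b) (g \<cdot> c)"
  by (metis pair_assoc pair_ty(1) pair_ty(2) cross_pair)

lemma cross_pair_pair'[simp]: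
  "dm a = dm b \<Longrightarrow> dm b = dm c \<Longrightarrow> dm f = cd a \<otimes> cd b \<Longrightarrow> dm g = cd c \<Longrightarrow> dm h = cd f \<otimes> cd g \<Longrightarrow>
  h \<cdot> cross f g \<cdot> pair a (pair b c) = h \<cdot> pair (f \<cdot> pair a b) (g \<cdot> c)"
  by (subst comp_assoc[symmetric]) auto

lemma cross_idm: "cross (idm A) (idm B) = idm (A \<otimes> B)"
  by (simp add: cross_def' pair_pr)

lemma dagger_ty[simp]: "dm f = A \<otimes> C \<Longrightarrow> cd f = A \<Longrightarrow> dm (dagger A C f) = C"
  "dm f = A \<otimes> C \<Longrightarrow> cd f = A \<Longrightarrow> cd (dagger A C f) = A"
  using conway unfolding conway_category_def hom_def by auto

lemma dagger_parameter: "dm f = A \<otimes> B \<Longrightarrow> cd f = A \<Longrightarrow> dm g = C \<Longrightarrow> cd g = B \<Longrightarrow>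
   dagger A C (f \<cdot> cross (idm A) g) = dagger A B f \<cdot> g"
  using conway unfolding conway_category_def hom_def by auto

lemma dagger_double: "dm f = A \<otimes> (A \<otimes> C) \<Longrightarrow> cd f = A \<Longrightarrow>
   dagger A C (dagger A (A \<otimes> C) f) = dagger A C (f \<cdot> cross (pair (idm A) (idm A)) (idm C))"
  using conway unfolding conway_category_def hom_def by auto

lemma dagger_composition: "dm f = B \<otimes> C \<Longrightarrow> cd f = A \<Longrightarrow> dm g = A \<otimes> C \<Longrightarrow> cd g = B \<Longrightarrow>
   dagger A C (f \<cdot> pair g (pr2 A C)) = f \<cdot> pair (dagger B C (g \<cdot> pair f (pr2 B C))) (idm C)"
  using conway unfolding conway_category_def hom_def by blast

lemma dagger_fixpoint: "dm f = A \<otimes> C \<Longrightarrow> cd f = A \<Longrightarrow> f \<cdot> pair (dagger A C f) (idm C) = dagger A C f"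
  using dagger_composition[of f A C A "pr1 A C"] by (simp add: pair_pr)

lemma dagger_const: "dm k = C \<Longrightarrow> cd k = A \<Longrightarrow> dagger A C (k \<cdot> pr2 A C) = k"
  using dagger_fixpoint[of "k \<cdot> pr2 A C" A C] by simp

lemma dagger_dinaturality: "dm h = B \<otimes> C \<Longrightarrow> cd h = B \<Longrightarrow> dm r = B \<Longrightarrow> cd r = A \<Longrightarrow> dm s = A \<Longrightarrow> cd s = B \<Longrightarrow>
   dagger A C (r \<cdot> h \<cdot> cross s (idm C)) = r \<cdot> dagger B C (h \<cdot> cross (s \<cdot> r) (idm C))"
proof -
  assume a: "dm h = B \<otimes> C" "cd h = B" "dm r = B" "cd r = A" "dm s = A" "cd s = B"
  have outer: "dagger A C (r \<cdot> h \<cdot> pair (s \<cdot> pr1 A C) (pr2 A C)) = r \<cdot> h \<cdot> pair (dagger B C (s \<cdot> pr1 A C \<cdot> pair (r \<cdot> h) (pr2 B C))) (idm C)"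
    using dagger_composition[of "r \<cdot> h" B C A "s \<cdot> pr1 A C"] a by simp
  have inner: "dagger B C (h \<cdot> pair (s \<cdot> r \<cdot> pr1 B C) (pr2 B C)) = h \<cdot> pair (dagger B C (s \<cdot> r \<cdot> pr1 B C \<cdot> pair h (pr2 B C))) (idm C)"
    using dagger_composition[of h B C B "s \<cdot> r \<cdot> pr1 B C"] a by simp
  have outer_arg: "s \<cdot> pr1 A C \<cdot> pair (r \<cdot> h) (pr2 B C) = s \<cdot> r \<cdot> h" using a by simp
  have inner_arg: "s \<cdot> r \<cdot> pr1 B C \<cdot> pair h (pr2 B C) = s \<cdot> r \<cdot> h" using a by simp
  show ?thesis using outer inner outer_arg inner_arg a by (simp add: cross_def')
qed

lemma bekic:
  assumes h: "dm h = (X \<otimes> Y) \<otimes> C" "cd h = X \<otimes> Y"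
  defines "gr \<equiv> pr2 X Y \<cdot> h \<cdot> pair (pr1 X C \<cdot> pr2 Y (X \<otimes> C)) (pair (pr1 Y (X \<otimes> C)) (pr2 X C \<cdot> pr2 Y (X \<otimes> C)))"
  defines "G \<equiv> dagger Y (X \<otimes> C) gr"
  defines "e \<equiv> pr1 X Y \<cdot> h \<cdot> pair (pr1 X C) (pair G (pr2 X C))"
  shows "pr1 X Y \<cdot> dagger (X \<otimes> Y) C h = dagger X C e"
proof -
  define A where "A = X \<otimes> Y"
  define W where "W = A \<otimes> C"
  have gr_ty: "dm gr = Y \<otimes> (X \<otimes> C)" "cd gr = Y" using h by (simp_all add: gr_def)
  have G_ty: "dm G = X \<otimes> C" "cd G = Y" using gr_ty by (simp_all add: G_def)
  define F where "F = h \<cdot> pair (pr1 X Y \<cdot> pr1 A C \<cdot> pr2 A W) (pair (pr2 X Y \<cdot> pr1 A W) (pr2 A C \<cdot> pr2 A W))"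
  have F_ty: "dm F = A \<otimes> W" "cd F = A" using h by (simp_all add: F_def A_def W_def)
  have F_diag: "F \<cdot> cross (pair (idm A) (idm A)) (idm C) = h"
  proof -
    have "F \<cdot> cross (pair (idm A) (idm A)) (idm C) = h \<cdot> pair (pr1 X Y \<cdot> pr1 A C) (pair (pr2 X Y \<cdot> pr1 A C) (pr2 A C))"
      using h by (simp add: F_def A_def W_def cross_def')
    also have "\<dots> = h" using h pair_pr_assoc[of X Y C] by (simp add: A_def)
    finally show ?thesis .
  qed
  have dd: "dagger A C h = dagger A C (dagger A W F)"
    using dagger_double[of F A C] F_ty F_diag by (simp add: W_def)
  define K where "K = h \<cdot> pair (pr1 X Y \<cdot> pr1 A C \<cdot> pr2 Y W) (pair (pr1 Y W) (pr2 A C \<cdot> pr2 Y W))"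
  have K_ty: "dm K = Y \<otimes> W" "cd K = A" using h by (simp_all add: K_def A_def W_def)
  have F_split: "F = K \<cdot> pair (pr2 X Y \<cdot> pr1 A W) (pr2 A W)"
    using h by (simp add: F_def K_def A_def W_def)
  have dagger_F: "dagger A W F = K \<cdot> pair (dagger Y W (pr2 X Y \<cdot> pr1 A W \<cdot> pair K (pr2 Y W))) (idm W)"
    unfolding F_split
    using dagger_composition[of K Y W A "pr2 X Y \<cdot> pr1 A W"] K_ty h by (simp add: A_def W_def)
  have F_arg: "pr2 X Y \<cdot> pr1 A W \<cdot> pair K (pr2 Y W) = gr \<cdot> cross (idm Y) (cross (pr1 X Y) (idm C))"
    using h K_ty by (simp add: K_def gr_def A_def W_def cross_def')
  have dagger_F_arg: "dagger Y W (gr \<cdot> cross (idm Y) (cross (pr1 X Y) (idm C))) = G \<cdot> cross (pr1 X Y) (idm C)"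
    unfolding G_def
    using dagger_parameter[of gr Y "X \<otimes> C" "cross (pr1 X Y) (idm C)" W] gr_ty
    by (simp add: A_def W_def)
  define L where "L = h \<cdot> pair (pr1 X C) (pair G (pr2 X C))"
  have L_ty: "dm L = X \<otimes> C" "cd L = A" using h G_ty by (simp_all add: L_def A_def)
  have dagger_F_L: "dagger A W F = L \<cdot> cross (pr1 X Y) (idm C)"
    unfolding dagger_F F_arg dagger_F_arg
    using h G_ty by (simp add: K_def L_def A_def W_def cross_def')
  have L_cross: "L \<cdot> cross (pr1 X Y) (idm C) = L \<cdot> pair (pr1 X Y \<cdot> pr1 A C) (pr2 A C)"
    by (simp add: cross_def' A_def)
  have dagger_L: "dagger A C (L \<cdot> pair (pr1 X Y \<cdot> pr1 A C) (pr2 A C)) = L \<cdot> pair (dagger X C (pr1 X Y \<cdot> pr1 A C \<cdot> pair L (pr2 X C))) (idm C)"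
    using dagger_composition[of L X C A "pr1 X Y \<cdot> pr1 A C"] L_ty by (simp add: A_def)
  have e': "pr1 X Y \<cdot> pr1 A C \<cdot> pair L (pr2 X C) = e" using h G_ty by (simp add: e_def L_def A_def)
  have main: "dagger A C h = L \<cdot> pair (dagger X C e) (idm C)"
    using dd dagger_F_L L_cross dagger_L e' by simp
  have e_ty: "dm e = X \<otimes> C" "cd e = X" using h G_ty by (simp_all add: e_def)
  have pr1_L: "pr1 X Y \<cdot> L = e" using h G_ty by (simp add: e_def L_def)
  have "pr1 X Y \<cdot> dagger (X \<otimes> Y) C h = pr1 X Y \<cdot> L \<cdot> pair (dagger X C e) (idm C)"
    using main[unfolded A_def] L_ty e_ty by (simp add: A_def)
  also have "\<dots> = dagger X C e" using pr1_L dagger_fixpoint[of e X C] e_ty by simp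
  finally show ?thesis .
qed

section \<open>Finite powers, tuples and reindexing\<close>

abbreviation pw where "pw A n \<equiv> cpow S A n"
abbreviation prj where "prj A n i \<equiv> nproj S A n i"

definition tuple :: "nat \<Rightarrow> (nat \<Rightarrow> 'm) \<Rightarrow> 'm" where
  "tuple n F = ntuple S (map F [0..<n])"

definition reindex :: "'o \<Rightarrow> nat \<Rightarrow> (nat \<Rightarrow> nat) \<Rightarrow> nat \<Rightarrow> 'm" where
  "reindex A N \<alpha> p = tuple p (\<lambda>i. prj A N (\<alpha> i))"

lemma pw_Suc: "0 < n \<Longrightarrow> pw A (Suc n) = A \<otimes> pw A n"
  by (cases n) auto

lemma prj_Suc:
  "0 < n \<Longrightarrow> prj A (Suc n) i = (if i = 0 then pr1 A (pw A n) else prj A n (i - 1) \<cdot> pr2 A (pw A n))"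
  by (cases n) auto

lemma tuple_1[simp]: "tuple (Suc 0) F = F 0"
  by (simp add: tuple_def)

lemma tuple_Suc: "0 < n \<Longrightarrow> tuple (Suc n) F = pair (F 0) (tuple n (\<lambda>i. F (Suc i)))"
  by (cases n) (auto simp: tuple_def map_upt_Suc simp del: upt_Suc)

lemma prj_ty[simp]: "i < n \<Longrightarrow> dm (prj A n i) = pw A n" "i < n \<Longrightarrow> cd (prj A n i) = A"
proof (induction n arbitrary: i)
  case 0 { case 1 then show ?case by simp } { case 2 then show ?case by simp }
next
  case (Suc n)
  { case 1 then show ?case using Suc by (cases "n = 0") (auto simp: prj_Suc pw_Suc) }
  { case 2 then show ?case using Suc by (cases "n = 0") (auto simp: prj_Suc pw_Suc) }
qed

lemma tuple_dom[simp]: "0 < n \<Longrightarrow> (\<And>i. i < n \<Longrightarrow> dm (F i) = D) \<Longrightarrow> dm (tuple n F) = D"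
proof (induction n arbitrary: F)
  case 0 then show ?case by simp
next
  case (Suc n) then show ?case by (cases "n = 0") (auto simp: tuple_Suc)
qed

lemma tuple_cod[simp]:
  "0 < n \<Longrightarrow> (\<And>i. i < n \<Longrightarrow> dm (F i) = D) \<Longrightarrow> (\<And>i. i < n \<Longrightarrow> cd (F i) = A) \<Longrightarrow> cd (tuple n F) = pw A n"
proof (induction n arbitrary: F)
  case 0 then show ?case by simp
next
  case (Suc n) then show ?case by (cases "n = 0") (auto simp: tuple_Suc pw_Suc)
qed

lemma prj_tuple[simp]:
  "i < n \<Longrightarrow> (\<And>i. i < n \<Longrightarrow> dm (F i) = D) \<Longrightarrow> (\<And>i. i < n \<Longrightarrow> cd (F i) = A) \<Longrightarrow> prj A n i \<cdot> tuple n F = F i"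
proof (induction n arbitrary: F i)
  case 0 then show ?case by simp
next
  case (Suc n)
  show ?case
  proof (cases "n = 0")
    case True then show ?thesis using Suc by simp
  next
    case False
    then have n0: "0 < n" by simp
    show ?thesis
    proof (cases "i = 0")
      case True then show ?thesis using Suc n0 by (simp add: tuple_Suc prj_Suc)
    next
      case False
      then obtain j where ij: "i = Suc j" by (cases i) auto
      have jn: "j < n" using ij Suc.prems(1) by simp
      have "prj A (Suc n) i \<cdot> tuple (Suc n) F = prj A n j \<cdot> pr2 A (pw A n) \<cdot> pair (F 0) (tuple n (\<lambda>i. F (Suc i)))"
        using n0 ij by (simp add: tuple_Suc prj_Suc)
      also have "\<dots> = prj A n j \<cdot> tuple n (\<lambda>i. F (Suc i))"
        using n0 jn Suc.prems by (subst pr2_pair') auto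
      also have "\<dots> = F i" using Suc.IH[of j "\<lambda>i. F (Suc i)"] Suc.prems ij jn by auto
      finally show ?thesis .
    qed
  qed
qed

lemma tuple_comp:
  "0 < n \<Longrightarrow> (\<And>i. i < n \<Longrightarrow> dm (F i) = D) \<Longrightarrow> cd k = D \<Longrightarrow> tuple n F \<cdot> k = tuple n (\<lambda>i. F i \<cdot> k)"
proof (induction n arbitrary: F)
  case 0 then show ?case by simp
next
  case (Suc n) then show ?case by (cases "n = 0") (auto simp: tuple_Suc)
qed

lemma tuple_cong: "(\<And>i. i < n \<Longrightarrow> F i = G i) \<Longrightarrow> tuple n F = tuple n G"
  unfolding tuple_def by (rule arg_cong[where f="ntuple S"]) simp

lemma tuple_ext:
  "0 < n \<Longrightarrow> cd h = pw A n \<Longrightarrow> cd h' = pw A n \<Longrightarrow> (\<And>i. i < n \<Longrightarrow> prj A n i \<cdot> h = prj A n i \<cdot> h') \<Longrightarrow> h = h'"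
proof (induction n arbitrary: h h')
  case 0 then show ?case by simp
next
  case (Suc n)
  show ?case
  proof (cases "n = 0")
    case True then show ?thesis using Suc.prems(4)[of 0] Suc.prems by simp
  next
    case False
    then have n0: "0 < n" by simp
    have c: "cd h = A \<otimes> pw A n" "cd h' = A \<otimes> pw A n" using Suc.prems n0 by (auto simp: pw_Suc)
    show ?thesis
    proof (rule pair_ext[OF c])
      show "pr1 A (pw A n) \<cdot> h = pr1 A (pw A n) \<cdot> h'"
        using Suc.prems(4)[of 0] n0 by (simp add: prj_Suc)
      show "pr2 A (pw A n) \<cdot> h = pr2 A (pw A n) \<cdot> h'"
      proof (rule Suc.IH)
        show "0 < n" by (rule n0)
        show "cd (pr2 A (pw A n) \<cdot> h) = pw A n" "cd (pr2 A (pw A n) \<cdot> h') = pw A n"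
          using c by simp_all
        fix i assume i: "i < n"
        have "prj A (Suc n) (Suc i) \<cdot> h = prj A (Suc n) (Suc i) \<cdot> h'"
          using Suc.prems(4)[of "Suc i"] i by simp
        then show "prj A n i \<cdot> (pr2 A (pw A n) \<cdot> h) = prj A n i \<cdot> (pr2 A (pw A n) \<cdot> h')"
          using n0 i c by (simp add: prj_Suc)
      qed
    qed
  qed
qed

lemma reindex_ty[simp]: "0 < p \<Longrightarrow> (\<And>i. i < p \<Longrightarrow> \<alpha> i < N) \<Longrightarrow> dm (reindex A N \<alpha> p) = pw A N"
  "0 < p \<Longrightarrow> (\<And>i. i < p \<Longrightarrow> \<alpha> i < N) \<Longrightarrow> cd (reindex A N \<alpha> p) = pw A p"
  unfolding reindex_def by auto

lemma prj_reindex[simp]: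
  "i < p \<Longrightarrow> (\<And>i. i < p \<Longrightarrow> \<alpha> i < N) \<Longrightarrow> prj A p i \<cdot> reindex A N \<alpha> p = prj A N (\<alpha> i)"
  unfolding reindex_def by (rule prj_tuple) auto

lemma prj_reindex'[simp]:
  "i < p \<Longrightarrow> (\<And>i. i < p \<Longrightarrow> \<alpha> i < N) \<Longrightarrow> dm h = A \<Longrightarrow> h \<cdot> prj A p i \<cdot> reindex A N \<alpha> p = h \<cdot> prj A N (\<alpha> i)"
  by (subst comp_assoc[symmetric]) auto

lemma reindex_comp:
  "0 < p \<Longrightarrow> (\<And>i. i < p \<Longrightarrow> \<alpha> i < N) \<Longrightarrow> cd k = pw A N \<Longrightarrow>
   reindex A N \<alpha> p \<cdot> k = tuple p (\<lambda>i. prj A N (\<alpha> i) \<cdot> k)"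
  unfolding reindex_def by (rule tuple_comp) auto

lemma reindex_reindex: "0 < p \<Longrightarrow> 0 < N \<Longrightarrow> (\<And>i. i < p \<Longrightarrow> \<alpha> i < N) \<Longrightarrow> (\<And>i. i < N \<Longrightarrow> \<beta> i < M) \<Longrightarrow>
   reindex A N \<alpha> p \<cdot> reindex A M \<beta> N = reindex A M (\<lambda>i. \<beta> (\<alpha> i)) p"
  by (subst reindex_comp) (auto simp: reindex_def intro!: tuple_cong)

lemma reindex_id: "0 < N \<Longrightarrow> reindex A N (\<lambda>i. i) N = idm (pw A N)"
  by (rule tuple_ext[of N _ A]) auto

lemma reindex_cong: "(\<And>i. i < p \<Longrightarrow> \<alpha> i = \<beta> i) \<Longrightarrow> reindex A N \<alpha> p = reindex A N \<beta> p"
  unfolding reindex_def by (rule tuple_cong) simp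

abbreviation diag where "diag A n \<equiv> cdiag S A n"

lemma diag_tuple: "diag A n = tuple n (\<lambda>i. idm A)"
  by (simp add: cdiag_def tuple_def map_replicate_const)

lemma diag_ty[simp]: "0 < n \<Longrightarrow> dm (diag A n) = A" "0 < n \<Longrightarrow> cd (diag A n) = pw A n"
  by (simp_all add: diag_tuple)

lemma prj_diag[simp]: "i < n \<Longrightarrow> prj A n i \<cdot> diag A n = idm A"
  by (simp add: diag_tuple)

lemma prj_diag'[simp]: "i < n \<Longrightarrow> dm h = A \<Longrightarrow> h \<cdot> prj A n i \<cdot> diag A n = h"
  by (subst comp_assoc[symmetric]) auto

lemma reindex_diag: "0 < p \<Longrightarrow> 0 < N \<Longrightarrow> (\<And>i. i < p \<Longrightarrow> \<alpha> i < N) \<Longrightarrow> reindex A N \<alpha> p \<cdot> diag A N = diag A p"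
  by (rule tuple_ext[of p _ A]) auto

lemma reindex_Suc:
  "0 < r \<Longrightarrow> reindex A N \<tau> (Suc r) = pair (prj A N (\<tau> 0)) (reindex A N (\<lambda>j. \<tau> (Suc j)) r)"
  by (simp add: reindex_def tuple_Suc)

lemma diag_Suc: "0 < r \<Longrightarrow> diag A (Suc r) = pair (idm A) (diag A r)"
  by (simp add: diag_tuple tuple_Suc)

lemma pr1_prod_assoc: "pr1 A (B \<otimes> C) = pr1 A B \<cdot> pr1 (A \<otimes> B) C"
proof -
  have "pr1 A (B \<otimes> C) = pr1 A (B \<otimes> C) \<cdot> idm (A \<otimes> (B \<otimes> C))" by simp
  also have "\<dots> = pr1 A B \<cdot> pr1 (A \<otimes> B) C" by (simp add: pair_pr_assoc[symmetric] del: pair_assoc)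
  finally show ?thesis .
qed

lemma pr2_prod_assoc: "pr2 A (B \<otimes> C) = pair (pr2 A B \<cdot> pr1 (A \<otimes> B) C) (pr2 (A \<otimes> B) C)"
proof -
  have "pr2 A (B \<otimes> C) = pr2 A (B \<otimes> C) \<cdot> idm (A \<otimes> (B \<otimes> C))" by simp
  also have "\<dots> = pair (pr2 A B \<cdot> pr1 (A \<otimes> B) C) (pr2 (A \<otimes> B) C)"
    by (simp add: pair_pr_assoc[symmetric] del: pair_assoc)
  finally show ?thesis .
qed

lemma pw_add: "0 < p \<Longrightarrow> 0 < r \<Longrightarrow> pw A (p + r) = pw A p \<otimes> pw A r"
proof (induction p)
  case 0 then show ?case by simp
next
  case (Suc p) then show ?case by (cases "p = 0") (auto simp: pw_Suc)
qed

lemma prj_add_left: "i < p \<Longrightarrow> 0 < r \<Longrightarrow> prj A (p + r) i = prj A p i \<cdot> pr1 (pw A p) (pw A r)"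
proof (induction p arbitrary: i)
  case 0 then show ?case by simp
next
  case (Suc p)
  show ?case
  proof (cases "p = 0")
    case True then show ?thesis using Suc by (simp add: prj_Suc)
  next
    case False
    then have p0: "0 < p" by simp
    have e: "Suc p + r = Suc (p + r)" by simp
    show ?thesis
    proof (cases "i = 0")
      case True then show ?thesis using p0 Suc.prems
        by (simp only: e prj_Suc pw_add pw_Suc) (simp add: pr1_prod_assoc)
    next
      case False
      then obtain j where ij: "i = Suc j" by (cases i) auto
      have "prj A (Suc p + r) i = prj A (p + r) j \<cdot> pr2 A (pw A (p + r))"
        using ij p0 Suc.prems by (simp only: e prj_Suc) simp
      also have "\<dots> = prj A p j \<cdot> pr1 (pw A p) (pw A r) \<cdot> pr2 A (pw A p \<otimes> pw A r)"
        using Suc.IH[of j] ij Suc.prems p0 by (simp add: pw_add)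
      also have "\<dots> = prj A p j \<cdot> pr2 A (pw A p) \<cdot> pr1 (A \<otimes> pw A p) (pw A r)"
        using ij Suc.prems p0 by (simp add: pr2_prod_assoc)
      also have "\<dots> = prj A (Suc p) i \<cdot> pr1 (pw A (Suc p)) (pw A r)"
        using ij Suc.prems p0 by (simp add: prj_Suc pw_Suc)
      finally show ?thesis .
    qed
  qed
qed

lemma prj_add_right: "i < r \<Longrightarrow> 0 < p \<Longrightarrow> prj A (p + r) (p + i) = prj A r i \<cdot> pr2 (pw A p) (pw A r)"
proof (induction p)
  case 0 then show ?case by simp
next
  case (Suc p)
  show ?case
  proof (cases "p = 0")
    case True then show ?thesis using Suc by (simp add: prj_Suc)
  next
    case False
    then have p0: "0 < p" by simp
    have e: "Suc p + r = Suc (p + r)" by simp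
    have r0: "0 < r" using Suc.prems by simp
    have "prj A (Suc p + r) (Suc p + i) = prj A (p + r) (p + i) \<cdot> pr2 A (pw A (p + r))"
      using p0 r0 by (simp only: e prj_Suc) simp
    also have "\<dots> = prj A r i \<cdot> pr2 (pw A p) (pw A r) \<cdot> pr2 A (pw A p \<otimes> pw A r)"
      using Suc.IH Suc.prems p0 by (simp add: pw_add)
    also have "\<dots> = prj A r i \<cdot> pr2 (pw A (Suc p)) (pw A r)"
      using Suc.prems p0 by (simp add: pr2_prod_assoc pw_Suc)
    finally show ?thesis .
  qed
qed

lemma pw_mult: "0 < n \<Longrightarrow> 0 < p \<Longrightarrow> pw (pw A p) n = pw A (n * p)"
proof (induction n)
  case 0 then show ?case by simp
next
  case (Suc n) then show ?case
    by (cases "n = 0") (auto simp: pw_Suc pw_add[symmetric])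
qed

lemma prj_mult: "i < n \<Longrightarrow> j < p \<Longrightarrow> prj A (n * p) (i * p + j) = prj A p j \<cdot> prj (pw A p) n i"
proof (induction n arbitrary: i)
  case 0 then show ?case by simp
next
  case (Suc n)
  show ?case
  proof (cases "n = 0")
    case True then show ?thesis using Suc by simp
  next
    case False
    then have n0: "0 < n" by simp
    have e: "Suc n * p = p + n * p" by simp
    have np0: "0 < n * p" using n0 Suc.prems by simp
    show ?thesis
    proof (cases "i = 0")
      case True then show ?thesis using Suc.prems n0 np0
        by (simp only: e prj_add_left prj_Suc) (simp add: pw_mult)
    next
      case False
      then obtain i' where ii: "i = Suc i'" by (cases i) auto
      have e2: "i * p + j = p + (i' * p + j)" using ii by simp
      have lt: "i' * p + j < n * p" using ii Suc.prems
      proof -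
        have "i' < n" using ii Suc.prems by simp
        then have "i' * p + p \<le> n * p" by (metis add.commute mult_Suc less_eq_Suc_le mult_le_mono1)
        then show ?thesis using Suc.prems(2) by linarith
      qed
      have "prj A (Suc n * p) (i * p + j) = prj A (n * p) (i' * p + j) \<cdot> pr2 (pw A p) (pw A (n * p))"
        using prj_add_right[OF lt, of p A] Suc.prems(2) by (simp only: e e2)
      also have "\<dots> = prj A p j \<cdot> prj (pw A p) n i' \<cdot> pr2 (pw A p) (pw (pw A p) n)"
        using Suc.IH[of i'] ii Suc.prems n0 by (simp add: pw_mult)
      also have "\<dots> = prj A p j \<cdot> prj (pw A p) (Suc n) i"
        using ii Suc.prems n0 by (simp add: prj_Suc)
      finally show ?thesis .
    qed
  qed
qed

lemma prj_mult_div_mod: "I < n * p \<Longrightarrow> prj A (n * p) I = prj A p (I mod p) \<cdot> prj (pw A p) n (I div p)"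
proof -
  assume I: "I < n * p"
  then have p0: "0 < p" by (cases p) auto
  have "I div p < n" using I by (simp add: div_less_iff_less_mult p0)
  moreover have "I mod p < p" using p0 by simp
  ultimately show ?thesis using prj_mult[of "I div p" n "I mod p" p A] by simp
qed

lemma diag_diag: "0 < n \<Longrightarrow> 0 < p \<Longrightarrow> diag (pw A p) n \<cdot> diag A p = diag A (n * p)"
proof (rule tuple_ext[of "n * p" _ A])
  fix I assume n0: "0 < n" and p0: "0 < p" and I: "I < n * p"
  have i: "I div p < n" using I p0 by (simp add: div_less_iff_less_mult)
  have j: "I mod p < p" using p0 by simp
  have "prj A (n * p) I \<cdot> diag A (n * p) = idm A" using I by simp
  moreover have "prj A (n * p) I \<cdot> (diag (pw A p) n \<cdot> diag A p) = idm A"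
    using prj_mult_div_mod[OF I, of A] i j n0 p0 pw_mult[OF n0 p0, of A] by simp
  ultimately show "prj A (n * p) I \<cdot> (diag (pw A p) n \<cdot> diag A p) = prj A (n * p) I \<cdot> diag A (n * p)"
    by simp
qed (auto simp: pw_mult)

text \<open>The variables outside the image of \<open>\<alpha>\<close> can be eliminated if either the selected components
  of \<open>h\<close> do not depend on them, or each of them is a copy of a selected variable. After a permutation
  of the coordinates that moves the selected ones to the front, this is Bekic's identity.\<close>

lemma dagger_reindex_proper:
  assumes p0: "0 < p" "p < N"
  and \<pi>: "\<forall>i<N. \<pi> i < N" "\<forall>i<p. \<pi> i = \<alpha> i" "\<forall>j<N. \<pi>i j < N \<and> \<pi> (\<pi>i j) = j" "\<forall>i<N. \<pi>i (\<pi> i) = i"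
  and \<beta>: "\<forall>i<p. \<beta> (\<alpha> i) = i" "\<forall>j<N. \<beta> j < p"
  and h: "dm h = pw A N \<otimes> C" "cd h = pw A N"
  and hyp: "(reindex A N \<alpha> p \<cdot> h = reindex A N \<alpha> p \<cdot> h \<cdot> cross (reindex A p \<beta> N \<cdot> reindex A N \<alpha> p) (idm C)) \<or>
            (\<forall>j<N. j \<notin> \<alpha> ` {..<p} \<longrightarrow> prj A N j \<cdot> h = prj A N (\<alpha> (\<beta> j)) \<cdot> pr1 (pw A N) C)"
  shows "reindex A N \<alpha> p \<cdot> dagger (pw A N) C h = dagger (pw A p) C (reindex A N \<alpha> p \<cdot> h \<cdot> cross (reindex A p \<beta> N) (idm C))"
proof -
  define r where "r = N - p"
  have Nr: "N = p + r" and r0: "0 < r" using p0 by (auto simp: r_def)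
  define X where "X = pw A p"
  define Y where "Y = pw A r"
  have XY[simp]: "pw A N = X \<otimes> Y" by (simp add: Nr pw_add p0 r0 X_def Y_def)
  have N0: "0 < N" using p0 by simp
  have \<alpha>N: "\<And>i. i < p \<Longrightarrow> \<alpha> i < N" using \<pi> p0 by (metis order.strict_trans)
  have prj_left: "\<And>i. i < p \<Longrightarrow> prj A N i = prj A p i \<cdot> pr1 X Y"
    using prj_add_left[OF _ r0] by (simp add: Nr X_def Y_def)
  have prj_right: "\<And>i. i < r \<Longrightarrow> prj A N (p + i) = prj A r i \<cdot> pr2 X Y"
    using prj_add_right[OF _ p0(1)] by (simp add: Nr X_def Y_def)
  have cX[simp]: "pw A p = X" by (simp add: X_def)
  have cY[simp]: "pw A r = Y" by (simp add: Y_def)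
  define P where "P = reindex A N \<pi> N"
  define P' where "P' = reindex A N \<pi>i N"
  have P_ty[simp]: "dm P = X \<otimes> Y" "cd P = X \<otimes> Y" using \<pi> N0 by (simp_all add: P_def)
  have P'_ty[simp]: "dm P' = X \<otimes> Y" "cd P' = X \<otimes> Y" using \<pi> N0 by (simp_all add: P'_def)
  have PP': "P \<cdot> P' = idm (X \<otimes> Y)"
    unfolding P_def P'_def
    using \<pi> N0 reindex_id[OF N0, of A] by (subst reindex_reindex) (auto cong: reindex_cong)
  have P'P: "P' \<cdot> P = idm (X \<otimes> Y)"
    unfolding P_def P'_def
    using \<pi> N0 reindex_id[OF N0, of A] by (subst reindex_reindex) (auto cong: reindex_cong)
  define \<rho> where "\<rho> = reindex A N \<alpha> p"
  define \<sigma> where "\<sigma> = reindex A p \<beta> N"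
  have \<rho>_ty[simp]: "dm \<rho> = X \<otimes> Y" "cd \<rho> = X" using \<alpha>N p0 by (simp_all add: \<rho>_def)
  have \<sigma>_ty[simp]: "dm \<sigma> = X" "cd \<sigma> = X \<otimes> Y" using \<beta> N0 by (simp_all add: \<sigma>_def)
  have \<rho>_eq: "\<rho> = pr1 X Y \<cdot> P"
  proof (rule tuple_ext[of p _ A])
    fix i assume i: "i < p"
    have "prj A p i \<cdot> (pr1 X Y \<cdot> P) = prj A p i \<cdot> pr1 X Y \<cdot> P" using i by simp
    also have "\<dots> = prj A N i \<cdot> P" using prj_left[OF i] by simp
    also have "\<dots> = prj A N (\<alpha> i)" using i \<pi> p0 unfolding P_def by (subst prj_reindex) auto
    finally show "prj A p i \<cdot> \<rho> = prj A p i \<cdot> (pr1 X Y \<cdot> P)"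
      using i \<alpha>N unfolding \<rho>_def by simp
  qed (use p0 in auto)
  define h' where "h' = P \<cdot> h \<cdot> cross P' (idm C)"
  have h'_ty: "dm h' = (X \<otimes> Y) \<otimes> C" "cd h' = X \<otimes> Y" using h by (simp_all add: h'_def)
  have dagger_h': "dagger (X \<otimes> Y) C h' = P \<cdot> dagger (X \<otimes> Y) C h"
    using dagger_dinaturality[of h "X \<otimes> Y" C P "X \<otimes> Y" P'] h P'P by (simp add: h'_def cross_idm)
  define gr where "gr = pr2 X Y \<cdot> h' \<cdot> pair (pr1 X C \<cdot> pr2 Y (X \<otimes> C)) (pair (pr1 Y (X \<otimes> C)) (pr2 X C \<cdot> pr2 Y (X \<otimes> C)))"
  define G where "G = dagger Y (X \<otimes> C) gr"
  define e where "e = pr1 X Y \<cdot> h' \<cdot> pair (pr1 X C) (pair G (pr2 X C))"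
  have gr_ty: "dm gr = Y \<otimes> (X \<otimes> C)" "cd gr = Y" using h'_ty by (simp_all add: gr_def)
  have G_ty: "dm G = X \<otimes> C" "cd G = Y" using gr_ty by (simp_all add: G_def)
  have B: "pr1 X Y \<cdot> dagger (X \<otimes> Y) C h' = dagger X C e"
    using bekic[OF h'_ty] unfolding e_def G_def gr_def .
  have lhs: "\<rho> \<cdot> dagger (X \<otimes> Y) C h = dagger X C e"
    using B h unfolding \<rho>_eq dagger_h' by simp
  have pr1_h': "pr1 X Y \<cdot> h' = \<rho> \<cdot> h \<cdot> cross P' (idm C)"
    using h unfolding h'_def \<rho>_eq by simp
  have \<rho>P': "\<rho> \<cdot> P' = pr1 X Y"
    using PP' unfolding \<rho>_eq by (simp del: comp_assoc add: comp_assoc[symmetric])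
  have e_eq: "e = \<rho> \<cdot> h \<cdot> cross \<sigma> (idm C)"
    using hyp
  proof
    assume sub: "reindex A N \<alpha> p \<cdot> h = reindex A N \<alpha> p \<cdot> h \<cdot> cross (reindex A p \<beta> N \<cdot> reindex A N \<alpha> p) (idm C)"
    have "e = \<rho> \<cdot> h \<cdot> cross P' (idm C) \<cdot> pair (pr1 X C) (pair G (pr2 X C))"
      using h G_ty unfolding e_def pr1_h'[symmetric] by simp
    also have "\<dots> = \<rho> \<cdot> h \<cdot> cross (\<sigma> \<cdot> \<rho>) (idm C) \<cdot> cross P' (idm C) \<cdot> pair (pr1 X C) (pair G (pr2 X C))"
      using sub unfolding \<rho>_def[symmetric] \<sigma>_def[symmetric] by simp
    also have "\<dots> = \<rho> \<cdot> h \<cdot> cross (\<sigma> \<cdot> pr1 X Y) (idm C) \<cdot> pair (pr1 X C) (pair G (pr2 X C))"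
      using h \<rho>P' by (simp del: comp_assoc add: comp_assoc[symmetric])
    also have "\<dots> = \<rho> \<cdot> h \<cdot> cross \<sigma> (idm C)"
      using h G_ty by (simp add: cross_def')
    finally show ?thesis .
  next
    assume elim: "\<forall>j<N. j \<notin> \<alpha> ` {..<p} \<longrightarrow> prj A N j \<cdot> h = prj A N (\<alpha> (\<beta> j)) \<cdot> pr1 (pw A N) C"
    define D where "D = tuple r (\<lambda>i. prj A p (\<beta> (\<pi> (p + i))))"
    have Dr: "\<And>i. i < r \<Longrightarrow> \<beta> (\<pi> (p + i)) < p" using \<beta> \<pi> Nr by simp
    have D_ty: "dm D = X" "cd D = Y" using Dr r0 by (simp_all add: D_def)
    have \<pi>i\<alpha>: "\<And>k. k < p \<Longrightarrow> \<pi>i (\<alpha> k) = k" using \<pi> p0 by (metis order.strict_trans)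
    have pr2_h': "pr2 X Y \<cdot> h' = D \<cdot> pr1 X Y \<cdot> pr1 (X \<otimes> Y) C"
    proof (rule tuple_ext[of r _ A])
      fix i assume i: "i < r"
      have pi_n: "\<pi> (p + i) \<notin> \<alpha> ` {..<p}"
      proof
        assume "\<pi> (p + i) \<in> \<alpha> ` {..<p}"
        then obtain k where k: "k < p" "\<pi> (p + i) = \<alpha> k" by auto
        then have "\<pi> (p + i) = \<pi> k" using \<pi> by simp
        then have "\<pi>i (\<pi> (p + i)) = \<pi>i (\<pi> k)" by simp
        moreover have "\<pi>i (\<pi> (p + i)) = p + i" using \<pi> i Nr by simp
        moreover have "\<pi>i (\<pi> k) = k" using \<pi>i\<alpha>[OF k(1)] \<pi> k by simp
        ultimately show False using k by simp
      qed
      have piN: "\<pi> (p + i) < N" using \<pi> i Nr by simp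
      have b1: "\<beta> (\<pi> (p + i)) < p" using \<beta> piN by simp
      have piN': "p + i < N" using i Nr by simp
      have "prj A r i \<cdot> (pr2 X Y \<cdot> h') = prj A N (p + i) \<cdot> h'"
        using i h'_ty by (simp add: prj_right)
      also have "\<dots> = prj A N (\<pi> (p + i)) \<cdot> h \<cdot> cross P' (idm C)"
        using piN' h \<pi> N0 unfolding h'_def P_def by simp
      also have "\<dots> = prj A N (\<alpha> (\<beta> (\<pi> (p + i)))) \<cdot> pr1 (X \<otimes> Y) C \<cdot> cross P' (idm C)"
        using elim pi_n piN h by simp
      also have "\<dots> = prj A N (\<alpha> (\<beta> (\<pi> (p + i)))) \<cdot> P' \<cdot> pr1 (X \<otimes> Y) C"
        using b1 \<alpha>N by (simp add: cross_def')
      also have "\<dots> = prj A N (\<beta> (\<pi> (p + i))) \<cdot> pr1 (X \<otimes> Y) C"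
        using b1 \<alpha>N \<pi> \<pi>i\<alpha>[OF b1] unfolding P'_def by simp
      also have "\<dots> = prj A r i \<cdot> (D \<cdot> pr1 X Y \<cdot> pr1 (X \<otimes> Y) C)"
        using b1 i D_ty Dr r0 unfolding prj_left[OF b1] by (simp add: D_def)
      finally show "prj A r i \<cdot> (pr2 X Y \<cdot> h') = prj A r i \<cdot> (D \<cdot> pr1 X Y \<cdot> pr1 (X \<otimes> Y) C)" .
    qed (use r0 h'_ty D_ty in auto)
    have gr_eq: "gr = D \<cdot> pr1 X C \<cdot> pr2 Y (X \<otimes> C)"
      unfolding gr_def using pr2_h' h'_ty D_ty
      by (simp del: comp_assoc add: comp_assoc[symmetric])
    have G_eq: "G = D \<cdot> pr1 X C" unfolding G_def gr_eq
      using dagger_const[of "D \<cdot> pr1 X C" "X \<otimes> C" Y] D_ty by simp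
    have P'D: "P' \<cdot> pair (idm X) D = \<sigma>"
    proof (rule tuple_ext[of N _ A])
      fix j assume j: "j < N"
      have pj: "\<pi>i j < N" "\<pi> (\<pi>i j) = j" using \<pi> j by auto
      show "prj A N j \<cdot> (P' \<cdot> pair (idm X) D) = prj A N j \<cdot> \<sigma>"
      proof (cases "\<pi>i j < p")
        case True
        have bj: "\<beta> j = \<pi>i j" using pj True \<pi> \<beta> by metis
        have "prj A N j \<cdot> (P' \<cdot> pair (idm X) D) = prj A N j \<cdot> P' \<cdot> pair (idm X) D"
          using j D_ty by simp
        also have "\<dots> = prj A N (\<pi>i j) \<cdot> pair (idm X) D" using j \<pi> N0 unfolding P'_def by simp
        also have "\<dots> = prj A p (\<pi>i j)" using D_ty True unfolding prj_left[OF True] by simp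
        also have "\<dots> = prj A N j \<cdot> \<sigma>" using j \<beta> N0 bj unfolding \<sigma>_def by simp
        finally show ?thesis .
      next
        case False
        then obtain i where i: "\<pi>i j = p + i" "i < r"
          using pj Nr by (metis add_diff_inverse_nat nat_add_left_cancel_less)
        have bj: "\<beta> (\<pi> (p + i)) = \<beta> j" using pj i by simp
        have "prj A N j \<cdot> (P' \<cdot> pair (idm X) D) = prj A N j \<cdot> P' \<cdot> pair (idm X) D"
          using j D_ty by simp
        also have "\<dots> = prj A N (p + i) \<cdot> pair (idm X) D" using j \<pi> N0 i unfolding P'_def by simp
        also have "\<dots> = prj A r i \<cdot> D" using D_ty i unfolding prj_right[OF i(2)] by simp
        also have "\<dots> = prj A p (\<beta> (\<pi> (p + i)))" using i Dr unfolding D_def by simp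
        also have "\<dots> = prj A p (\<beta> j)" by (simp only: bj)
        also have "\<dots> = prj A N j \<cdot> \<sigma>" using j \<beta> N0 unfolding \<sigma>_def by simp
        finally show ?thesis .
      qed
    qed (use N0 D_ty \<beta> in \<open>auto simp: \<sigma>_def\<close>)
    have "e = \<rho> \<cdot> h \<cdot> cross P' (idm C) \<cdot> pair (pr1 X C) (pair (D \<cdot> pr1 X C) (pr2 X C))"
      using h G_ty D_ty unfolding e_def pr1_h'[symmetric] G_eq by simp
    also have "\<dots> = \<rho> \<cdot> h \<cdot> pair (P' \<cdot> pair (idm X) D \<cdot> pr1 X C) (pr2 X C)"
      using h D_ty by simp
    also have "\<dots> = \<rho> \<cdot> h \<cdot> cross \<sigma> (idm C)"
      using P'D by (simp add: cross_def')
    finally show ?thesis .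
  qed
  show ?thesis using lhs e_eq unfolding \<rho>_def \<sigma>_def by simp
qed

lemma dagger_reindex:
  assumes p0: "0 < p" "p \<le> N"
  and \<alpha>: "inj_on \<alpha> {..<p}" "\<forall>i<p. \<alpha> i < N"
  and \<beta>: "\<forall>i<p. \<beta> (\<alpha> i) = i" "\<forall>j<N. \<beta> j < p"
  and h: "dm h = pw A N \<otimes> C" "cd h = pw A N"
  and hyp: "(reindex A N \<alpha> p \<cdot> h = reindex A N \<alpha> p \<cdot> h \<cdot> cross (reindex A p \<beta> N \<cdot> reindex A N \<alpha> p) (idm C)) \<or>
            (\<forall>j<N. j \<notin> \<alpha> ` {..<p} \<longrightarrow> prj A N j \<cdot> h = prj A N (\<alpha> (\<beta> j)) \<cdot> pr1 (pw A N) C)"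
  shows "reindex A N \<alpha> p \<cdot> dagger (pw A N) C h = dagger (pw A p) C (reindex A N \<alpha> p \<cdot> h \<cdot> cross (reindex A p \<beta> N) (idm C))"
proof (cases "p = N")
  case False
  then have pN: "p < N" using p0 by simp
  obtain \<pi> \<pi>i where "\<forall>i<N. \<pi> i < N" "\<forall>i<p. \<pi> i = \<alpha> i" "\<forall>j<N. \<pi>i j < N \<and> \<pi> (\<pi>i j) = j" "\<forall>i<N. \<pi>i (\<pi> i) = i"
    using extend_to_permutation[OF \<alpha>(1) \<alpha>(2)] by blast
  then show ?thesis using dagger_reindex_proper[OF p0(1) pN _ _ _ _ \<beta> h hyp] by blast
next
  case True
  have im: "\<alpha> ` {..<p} = {..<p}" using \<alpha> True by (intro endo_inj_surj) auto
  have ab: "\<forall>j<N. \<alpha> (\<beta> j) = j"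
  proof (intro allI impI)
    fix j assume "j < N"
    then obtain i where "i < p" "j = \<alpha> i" using im True by (metis imageE lessThan_iff)
    then show "\<alpha> (\<beta> j) = j" using \<beta> by simp
  qed
  have sr: "reindex A p \<beta> N \<cdot> reindex A N \<alpha> p = idm (pw A N)"
    using \<alpha> \<beta> p0 True reindex_id[of N A] ab by (subst reindex_reindex) (auto cong: reindex_cong)
  show ?thesis
    using dagger_dinaturality[of h "pw A N" C "reindex A N \<alpha> p" "pw A p" "reindex A p \<beta> N"] h sr \<alpha> \<beta> p0 True
    by (simp add: cross_idm)
qed

lemma dagger_copies:
  assumes R0: "0 < R" and K_ty: "dm K = pw A R \<otimes> C" "cd K = pw A R"
    and copies: "\<And>c. 0 < c \<Longrightarrow> c < R \<Longrightarrow> prj A R c \<cdot> K = prj A R 0 \<cdot> pr1 (pw A R) C"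
  shows "dagger (pw A R) C K = diag A R \<cdot> dagger A C (prj A R 0 \<cdot> K \<cdot> cross (diag A R) (idm C))"
proof -
  define k0 where "k0 = dagger A C (prj A R 0 \<cdot> K \<cdot> cross (diag A R) (idm C))"
  have k0_ty: "dm k0 = C" "cd k0 = A" using K_ty R0 by (simp_all add: k0_def)
  have b01: "reindex A R (\<lambda>_. 0) (Suc 0) = prj A R 0" by (simp add: reindex_def)
  have b02: "reindex A (Suc 0) (\<lambda>_. 0) R = diag A R" by (simp add: reindex_def diag_tuple)
  have first: "prj A R 0 \<cdot> dagger (pw A R) C K = k0"
  proof -
    have "reindex A R (\<lambda>_. 0) (Suc 0) \<cdot> dagger (pw A R) C K =
        dagger (pw A (Suc 0)) C (reindex A R (\<lambda>_. 0) (Suc 0) \<cdot> K \<cdot> cross (reindex A (Suc 0) (\<lambda>_. 0) R) (idm C))"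
    proof (rule dagger_reindex)
      show "reindex A R (\<lambda>_. 0) (Suc 0) \<cdot> K = reindex A R (\<lambda>_. 0) (Suc 0) \<cdot> K \<cdot> cross (reindex A (Suc 0) (\<lambda>_. 0) R \<cdot> reindex A R (\<lambda>_. 0) (Suc 0)) (idm C) \<or>
        (\<forall>j<R. j \<notin> (\<lambda>_. 0) ` {..<Suc 0} \<longrightarrow> prj A R j \<cdot> K = prj A R ((\<lambda>_. 0) ((\<lambda>_. 0) j)) \<cdot> pr1 (pw A R) C)"
        using copies by auto
    qed (use R0 K_ty in \<open>auto simp: inj_on_def\<close>)
    then show ?thesis unfolding b01 b02 k0_def by simp
  qed
  have "dagger (pw A R) C K = diag A R \<cdot> k0"
  proof (rule tuple_ext[of R _ A])
    fix c assume c: "c < R"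
    show "prj A R c \<cdot> dagger (pw A R) C K = prj A R c \<cdot> (diag A R \<cdot> k0)"
    proof (cases "c = 0")
      case True then show ?thesis using first k0_ty R0 by simp
    next
      case False
      have "prj A R c \<cdot> dagger (pw A R) C K = prj A R c \<cdot> (K \<cdot> pair (dagger (pw A R) C K) (idm C))"
        using dagger_fixpoint[of K "pw A R" C] K_ty c by simp
      also have "\<dots> = prj A R c \<cdot> K \<cdot> pair (dagger (pw A R) C K) (idm C)"
        using K_ty c by (subst comp_assoc) auto
      also have "\<dots> = prj A R 0 \<cdot> dagger (pw A R) C K" using copies[of c] False c K_ty R0 by simp
      also have "\<dots> = prj A R c \<cdot> (diag A R \<cdot> k0)" using first c k0_ty by simp
      finally show ?thesis .
    qed
  qed (use R0 K_ty k0_ty in auto)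
  then show ?thesis by (simp add: k0_def)
qed

section \<open>Closure properties of the identities \<open>\<Gamma>\<close>\<close>

abbreviation fq where "fq n m \<delta> A C f \<equiv> fQ S n m \<delta> A C f"

lemma fq_tuple: "fq n m \<delta> A C f = tuple n (\<lambda>i. f \<cdot> cross (reindex A n (\<delta> i) m) (idm C))"
  by (simp add: fQ_def rho_def tuple_def reindex_def)

lemma Gamma_iff: "Gamma S n m \<delta> \<longleftrightarrow> (\<forall>A C f. dm f = pw A m \<otimes> C \<and> cd f = A \<longrightarrow>
   dagger (pw A n) C (fq n m \<delta> A C f) = diag A n \<cdot> dagger A C (f \<cdot> cross (diag A m) (idm C)))"
  by (simp add: Gamma_def hom_def)

lemma fq_ty[simp]:
  "0 < n \<Longrightarrow> 0 < m \<Longrightarrow> trans_closed n m \<delta> \<Longrightarrow> dm f = pw A m \<otimes> C \<Longrightarrow> cd f = A \<Longrightarrow>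
   dm (fq n m \<delta> A C f) = pw A n \<otimes> C"
  "0 < n \<Longrightarrow> 0 < m \<Longrightarrow> trans_closed n m \<delta> \<Longrightarrow> dm f = pw A m \<otimes> C \<Longrightarrow> cd f = A \<Longrightarrow> cd (fq n m \<delta> A C f) = pw A n"
  by (simp_all add: fq_tuple trans_closed_def)

lemma prj_fq[simp]: "i < n \<Longrightarrow> 0 < m \<Longrightarrow> trans_closed n m \<delta> \<Longrightarrow> dm f = pw A m \<otimes> C \<Longrightarrow> cd f = A \<Longrightarrow>
   prj A n i \<cdot> fq n m \<delta> A C f = f \<cdot> cross (reindex A n (\<delta> i) m) (idm C)"
  unfolding fq_tuple by (subst prj_tuple) (auto simp: trans_closed_def)

lemma prj_fq'[simp]: "i < n \<Longrightarrow> 0 < m \<Longrightarrow> trans_closed n m \<delta> \<Longrightarrow> dm f = pw A m \<otimes> C \<Longrightarrow> cd f = A \<Longrightarrow> dm h = A \<Longrightarrow>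
   h \<cdot> prj A n i \<cdot> fq n m \<delta> A C f = h \<cdot> f \<cdot> cross (reindex A n (\<delta> i) m) (idm C)"
  by (subst comp_assoc[symmetric]) (auto simp: trans_closed_def)

lemma fq_cong: "(\<And>i j. i < n \<Longrightarrow> j < m \<Longrightarrow> \<delta> i j = \<delta>' i j) \<Longrightarrow> fq n m \<delta> A C f = fq n m \<delta>' A C f"
  unfolding fq_tuple
  by (rule tuple_cong, rule arg_cong[where f="\<lambda>x. f \<cdot> cross x (idm C)"], rule reindex_cong) auto

lemma Gamma_cong:
  assumes "\<And>i j. i < n \<Longrightarrow> j < m \<Longrightarrow> \<delta> i j = \<delta>' i j"
  shows "Gamma S n m \<delta> = Gamma S n m \<delta>'"
proof -
  have "\<And>A C f. fq n m \<delta> A C f = fq n m \<delta>' A C f" by (rule fq_cong) (rule assms, assumption+)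
  then show ?thesis unfolding Gamma_iff by simp
qed

lemma Gamma_letter_map:
  assumes G: "Gamma S N r \<tau>" and N0: "0 < N" and r0': "0 < r'" and lam: "\<forall>j<r'. lm j < r"
  and R: "trans_closed N r \<tau>" and eq: "\<forall>i<N. \<forall>j<r'. \<tau>' i j = \<tau> i (lm j)"
  shows "Gamma S N r' \<tau>'"
  unfolding Gamma_iff
proof (intro allI impI, elim conjE)
  fix A C f assume f: "dm f = pw A r' \<otimes> C" "cd f = A"
  have r0: "0 < r" using lam r0' by auto
  define f' where "f' = f \<cdot> cross (reindex A r lm r') (idm C)"
  have f'_ty: "dm f' = pw A r \<otimes> C" "cd f' = A" using f lam r0' by (simp_all add: f'_def)
  have fq_eq: "fq N r \<tau> A C f' = fq N r' \<tau>' A C f"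
    unfolding fq_tuple
  proof (rule tuple_cong)
    fix i assume i: "i < N"
    have "reindex A r lm r' \<cdot> reindex A N (\<tau> i) r = reindex A N (\<lambda>j. \<tau> i (lm j)) r'"
      using lam R i r0 r0' by (subst reindex_reindex) (auto simp: trans_closed_def)
    also have "\<dots> = reindex A N (\<tau>' i) r'" using eq i by (intro reindex_cong) auto
    finally have b: "reindex A r lm r' \<cdot> reindex A N (\<tau> i) r = reindex A N (\<tau>' i) r'" .
    show "f' \<cdot> cross (reindex A N (\<tau> i) r) (idm C) = f \<cdot> cross (reindex A N (\<tau>' i) r') (idm C)"
      using f lam R i r0 r0' b[symmetric] by (simp add: f'_def trans_closed_def)
  qed
  have diag_eq: "f' \<cdot> cross (diag A r) (idm C) = f \<cdot> cross (diag A r') (idm C)"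
    using f lam r0 r0' reindex_diag[of r' r lm A] by (simp add: f'_def)
  show "dagger (pw A N) C (fq N r' \<tau>' A C f) = diag A N \<cdot> dagger A C (f \<cdot> cross (diag A r') (idm C))"
    using G f'_ty unfolding Gamma_iff fq_eq[symmetric] diag_eq[symmetric] by blast
qed

lemma Gamma_subautomaton:
  assumes G: "Gamma S N r \<tau>" and R: "trans_closed N r \<tau>" and k0: "0 < k" and r0: "0 < r"
  and inj: "inj_on \<alpha> {..<k}" and \<alpha>N: "\<forall>s<k. \<alpha> s < N"
  and cl: "\<forall>s<k. \<forall>t<r. \<tau> (\<alpha> s) t = \<alpha> (\<tau>' s t)" and R': "trans_closed k r \<tau>'"
  shows "Gamma S k r \<tau>'"
  unfolding Gamma_iff
proof (intro allI impI, elim conjE)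
  fix A C f assume f: "dm f = pw A r \<otimes> C" "cd f = A"
  have kN: "k \<le> N" using card_inj_on_le[OF inj, of "{..<N}"] \<alpha>N by auto
  have N0: "0 < N" using k0 kN by simp
  define \<beta> where "\<beta> j = (if j \<in> \<alpha> ` {..<k} then the_inv_into {..<k} \<alpha> j else 0)" for j
  have \<beta>\<alpha>: "\<forall>i<k. \<beta> (\<alpha> i) = i" using the_inv_into_f_f[OF inj] by (auto simp: \<beta>_def)
  have \<beta>k: "\<forall>j<N. \<beta> j < k" using the_inv_into_into[OF inj] k0 by (auto simp: \<beta>_def)
  define h where "h = fq N r \<tau> A C f"
  have h_ty: "dm h = pw A N \<otimes> C" "cd h = pw A N" using f N0 r0 R by (simp_all add: h_def)
  have bt: "\<And>s. s < k \<Longrightarrow> reindex A N (\<tau> (\<alpha> s)) r \<cdot> reindex A k \<beta> N = reindex A k (\<tau>' s) r"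
  proof -
    fix s assume s: "s < k"
    have "reindex A N (\<tau> (\<alpha> s)) r \<cdot> reindex A k \<beta> N = reindex A k (\<lambda>t. \<beta> (\<tau> (\<alpha> s) t)) r"
      using s R \<alpha>N \<beta>k r0 N0 by (subst reindex_reindex) (auto simp: trans_closed_def)
    also have "\<dots> = reindex A k (\<tau>' s) r"
      using s cl \<beta>\<alpha> R' by (intro reindex_cong) (auto simp: trans_closed_def)
    finally show "reindex A N (\<tau> (\<alpha> s)) r \<cdot> reindex A k \<beta> N = reindex A k (\<tau>' s) r" .
  qed
  have sub: "reindex A N \<alpha> k \<cdot> h = reindex A N \<alpha> k \<cdot> h \<cdot> cross (reindex A k \<beta> N \<cdot> reindex A N \<alpha> k) (idm C)"
  proof (rule tuple_ext[of k _ A])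
    fix s assume s: "s < k"
    have b2: "reindex A k (\<tau>' s) r \<cdot> reindex A N \<alpha> k = reindex A N (\<tau> (\<alpha> s)) r"
    proof -
      have "reindex A k (\<tau>' s) r \<cdot> reindex A N \<alpha> k = reindex A N (\<lambda>t. \<alpha> (\<tau>' s t)) r"
        using s R' \<alpha>N r0 k0 by (subst reindex_reindex) (auto simp: trans_closed_def)
      also have "\<dots> = reindex A N (\<tau> (\<alpha> s)) r" using s cl by (intro reindex_cong) auto
      finally show ?thesis .
    qed
    have "prj A k s \<cdot> (reindex A N \<alpha> k \<cdot> h \<cdot> cross (reindex A k \<beta> N \<cdot> reindex A N \<alpha> k) (idm C))
        = f \<cdot> cross (reindex A N (\<tau> (\<alpha> s)) r \<cdot> reindex A k \<beta> N \<cdot> reindex A N \<alpha> k) (idm C)"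
      using s \<alpha>N \<beta>k h_ty f R r0 N0 k0 unfolding h_def by (simp add: trans_closed_def)
    also have "\<dots> = f \<cdot> cross (reindex A N (\<tau> (\<alpha> s)) r) (idm C)"
      using bt[OF s] b2 by simp
    also have "\<dots> = prj A k s \<cdot> (reindex A N \<alpha> k \<cdot> h)"
      using s \<alpha>N h_ty f R r0 N0 unfolding h_def by (simp add: trans_closed_def)
    finally show "prj A k s \<cdot> (reindex A N \<alpha> k \<cdot> h) = prj A k s \<cdot> (reindex A N \<alpha> k \<cdot> h \<cdot> cross (reindex A k \<beta> N \<cdot> reindex A N \<alpha> k) (idm C))" by simp
  qed (use k0 N0 \<alpha>N h_ty \<beta>k in auto)
  have B: "reindex A N \<alpha> k \<cdot> dagger (pw A N) C h = dagger (pw A k) C (reindex A N \<alpha> k \<cdot> h \<cdot> cross (reindex A k \<beta> N) (idm C))"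
    by (rule dagger_reindex[OF k0 kN inj \<alpha>N \<beta>\<alpha> \<beta>k h_ty]) (use sub in blast)
  have restricted: "reindex A N \<alpha> k \<cdot> h \<cdot> cross (reindex A k \<beta> N) (idm C) = fq k r \<tau>' A C f"
  proof (rule tuple_ext[of k _ A])
    fix s assume s: "s < k"
    show "prj A k s \<cdot> (reindex A N \<alpha> k \<cdot> h \<cdot> cross (reindex A k \<beta> N) (idm C)) = prj A k s \<cdot> fq k r \<tau>' A C f"
      using s \<alpha>N \<beta>k h_ty f R R' r0 N0 k0 bt[OF s] unfolding h_def by (simp add: trans_closed_def)
  qed (use k0 N0 \<alpha>N h_ty \<beta>k f R' r0 in auto)
  have GN: "dagger (pw A N) C h = diag A N \<cdot> dagger A C (f \<cdot> cross (diag A r) (idm C))"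
    using G f unfolding Gamma_iff h_def by blast
  show "dagger (pw A k) C (fq k r \<tau>' A C f) = diag A k \<cdot> dagger A C (f \<cdot> cross (diag A r) (idm C))"
    using B restricted GN f r0 N0 k0 \<alpha>N reindex_diag[of k N \<alpha> A] by simp
qed

text \<open>Letter \<open>0\<close> acts as the empty word. It gives the system an extra copy of the state variables;
  by the double dagger identity one may solve for that copy first, which decouples into the
  components and replaces \<open>f\<close> by its dagger in the first argument, and then apply \<open>\<Gamma>\<close>.\<close>
lemma Gamma_identity_letter:
  assumes G: "Gamma S N r \<tau>" and R: "trans_closed N r \<tau>" and N0: "0 < N" and r0: "0 < r"
  shows "Gamma S N (Suc r) (\<lambda>i j. if j = 0 then i else \<tau> i (j - 1))"
  unfolding Gamma_iff
proof (intro allI impI, elim conjE)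
  fix A C f assume f0: "dm f = pw A (Suc r) \<otimes> C" "cd f = A"
  define \<tau>2 where "\<tau>2 = (\<lambda>i j. if j = 0 then i else \<tau> i (j - 1))"
  define W where "W = pw A N"
  define R' where "R' = pw A r"
  have f: "dm f = A \<otimes> (R' \<otimes> C)" "cd f = A" using f0 r0 by (simp_all add: pw_Suc R'_def)
  have R2: "trans_closed N (Suc r) \<tau>2"
    using R by (auto simp: trans_closed_def \<tau>2_def less_Suc_eq_0_disj)
  have reindex_Suc_q: "\<And>q. q < N \<Longrightarrow> reindex A N (\<tau>2 q) (Suc r) = pair (prj A N q) (reindex A N (\<tau> q) r)"
    using r0 by (simp add: reindex_Suc \<tau>2_def)
  have bty: "\<And>q. q < N \<Longrightarrow> dm (reindex A N (\<tau> q) r) = W \<and> cd (reindex A N (\<tau> q) r) = R'"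
    using R r0 by (simp add: trans_closed_def W_def R'_def)
  define \<Phi> where "\<Phi> = tuple N (\<lambda>q. f \<cdot> pair (prj A N q \<cdot> pr1 W (W \<otimes> C)) (pair (reindex A N (\<tau> q) r \<cdot> pr1 W C \<cdot> pr2 W (W \<otimes> C)) (pr2 W C \<cdot> pr2 W (W \<otimes> C))))"
  have \<Phi>_ty: "dm \<Phi> = W \<otimes> (W \<otimes> C)" "cd \<Phi> = W"
    using N0 f bty by (simp_all add: \<Phi>_def W_def)
  have split_diag: "\<Phi> \<cdot> cross (pair (idm W) (idm W)) (idm C) = fq N (Suc r) \<tau>2 A C f"
    unfolding \<Phi>_def fq_tuple
  proof (subst tuple_comp)
    show "tuple N (\<lambda>i. f \<cdot> pair (prj A N i \<cdot> pr1 W (W \<otimes> C)) (pair (reindex A N (\<tau> i) r \<cdot> pr1 W C \<cdot> pr2 W (W \<otimes> C)) (pr2 W C \<cdot> pr2 W (W \<otimes> C))) \<cdot> cross (pair (idm W) (idm W)) (idm C)) =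
      tuple N (\<lambda>i. f \<cdot> cross (reindex A N (\<tau>2 i) (Suc r)) (idm C))"
    proof (rule tuple_cong)
      fix q assume q: "q < N"
      show "f \<cdot> pair (prj A N q \<cdot> pr1 W (W \<otimes> C)) (pair (reindex A N (\<tau> q) r \<cdot> pr1 W C \<cdot> pr2 W (W \<otimes> C)) (pr2 W C \<cdot> pr2 W (W \<otimes> C))) \<cdot> cross (pair (idm W) (idm W)) (idm C) =
        f \<cdot> cross (reindex A N (\<tau>2 q) (Suc r)) (idm C)"
        using q f bty[OF q] by (simp add: reindex_Suc_q cross_def' W_def pair_pr)
    qed
  qed (use N0 f bty in \<open>auto simp: W_def\<close>)
  have double: "dagger W C (fq N (Suc r) \<tau>2 A C f) = dagger W C (dagger W (W \<otimes> C) \<Phi>)"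
    using dagger_double[of \<Phi> W C] \<Phi>_ty split_diag by simp
  define fd where "fd = dagger A (R' \<otimes> C) f"
  have fd_ty: "dm fd = pw A r \<otimes> C" "cd fd = A" using f by (simp_all add: fd_def R'_def)
  have inner: "dagger W (W \<otimes> C) \<Phi> = fq N r \<tau> A C fd"
  proof (rule tuple_ext[of N _ A])
    fix q assume q: "q < N"
    have b1: "reindex A N (\<lambda>_. q) (Suc 0) = prj A N q" by (simp add: reindex_def)
    have b2: "reindex A (Suc 0) (\<lambda>_. 0) N = diag A N" by (simp add: reindex_def diag_tuple)
    have ph: "prj A N q \<cdot> \<Phi> = f \<cdot> pair (prj A N q \<cdot> pr1 W (W \<otimes> C)) (pair (reindex A N (\<tau> q) r \<cdot> pr1 W C \<cdot> pr2 W (W \<otimes> C)) (pr2 W C \<cdot> pr2 W (W \<otimes> C)))"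
      unfolding \<Phi>_def using q f bty by (subst prj_tuple) (auto simp: W_def)
    have sub: "prj A N q \<cdot> \<Phi> = prj A N q \<cdot> \<Phi> \<cdot> cross (diag A N \<cdot> prj A N q) (idm (W \<otimes> C))"
      using q f bty[OF q] \<Phi>_ty N0 unfolding ph by (simp add: cross_def' W_def)
    have BG0: "reindex A N (\<lambda>_. q) (Suc 0) \<cdot> dagger (pw A N) (W \<otimes> C) \<Phi> = dagger (pw A (Suc 0)) (W \<otimes> C) (reindex A N (\<lambda>_. q) (Suc 0) \<cdot> \<Phi> \<cdot> cross (reindex A (Suc 0) (\<lambda>_. 0) N) (idm (W \<otimes> C)))"
    proof (rule dagger_reindex)
      show "reindex A N (\<lambda>_. q) (Suc 0) \<cdot> \<Phi> = reindex A N (\<lambda>_. q) (Suc 0) \<cdot> \<Phi> \<cdot> cross (reindex A (Suc 0) (\<lambda>_. 0) N \<cdot> reindex A N (\<lambda>_. q) (Suc 0)) (idm (W \<otimes> C)) \<or>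
        (\<forall>j<N. j \<notin> (\<lambda>_. q) ` {..<Suc 0} \<longrightarrow> prj A N j \<cdot> \<Phi> = prj A N ((\<lambda>_. q) ((\<lambda>_. 0) j)) \<cdot> pr1 (pw A N) (W \<otimes> C))"
        using sub unfolding b1 b2 by blast
    qed (use q \<Phi>_ty N0 in \<open>auto simp: W_def inj_on_def\<close>)
    have BG: "prj A N q \<cdot> dagger W (W \<otimes> C) \<Phi> = dagger A (W \<otimes> C) (prj A N q \<cdot> \<Phi> \<cdot> cross (diag A N) (idm (W \<otimes> C)))"
      using BG0 unfolding b1 b2 by (simp add: W_def)
    have ph2: "prj A N q \<cdot> \<Phi> \<cdot> cross (diag A N) (idm (W \<otimes> C)) = f \<cdot> cross (idm A) (cross (reindex A N (\<tau> q) r) (idm C))"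
      using q f bty[OF q] \<Phi>_ty N0 unfolding ph by (simp add: cross_def' W_def)
    have "prj A N q \<cdot> dagger W (W \<otimes> C) \<Phi> = fd \<cdot> cross (reindex A N (\<tau> q) r) (idm C)"
      unfolding BG ph2 fd_def
      using dagger_parameter[of f A "R' \<otimes> C" "cross (reindex A N (\<tau> q) r) (idm C)" "W \<otimes> C"] f bty[OF q]
      by simp
    also have "\<dots> = prj A N q \<cdot> fq N r \<tau> A C fd" using q fd_ty R r0 by simp
    finally show "prj A N q \<cdot> dagger W (W \<otimes> C) \<Phi> = prj A N q \<cdot> fq N r \<tau> A C fd" .
  qed (use N0 \<Phi>_ty fd_ty R r0 in \<open>auto simp: W_def\<close>)
  have Gamma_fd: "dagger W C (fq N r \<tau> A C fd) = diag A N \<cdot> dagger A C (fd \<cdot> cross (diag A r) (idm C))"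
    using G fd_ty unfolding Gamma_iff W_def by blast
  have fd_diag: "fd \<cdot> cross (diag A r) (idm C) = dagger A (A \<otimes> C) (f \<cdot> cross (idm A) (cross (diag A r) (idm C)))"
    unfolding fd_def
    using dagger_parameter[of f A "R' \<otimes> C" "cross (diag A r) (idm C)" "A \<otimes> C"] f r0
    by (simp add: R'_def)
  have fd_double: "dagger A C (dagger A (A \<otimes> C) (f \<cdot> cross (idm A) (cross (diag A r) (idm C)))) = dagger A C (f \<cdot> cross (diag A (Suc r)) (idm C))"
  proof -
    have "f \<cdot> cross (idm A) (cross (diag A r) (idm C)) \<cdot> cross (pair (idm A) (idm A)) (idm C) = f \<cdot> cross (diag A (Suc r)) (idm C)"
      using f r0 by (simp add: cross_def' diag_Suc R'_def)
    then show ?thesis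
      using dagger_double[of "f \<cdot> cross (idm A) (cross (diag A r) (idm C))" A C] f r0
      by (simp add: R'_def)
  qed
  show "dagger (pw A N) C (fq N (Suc r) (\<lambda>i j. if j = 0 then i else \<tau> i (j - 1)) A C f) = diag A N \<cdot> dagger A C (f \<cdot> cross (diag A (Suc r)) (idm C))"
    using double inner Gamma_fd fd_diag fd_double unfolding \<tau>2_def[symmetric] W_def by simp
qed

text \<open>The state \<open>(i, j)\<close> of the product is coded by \<open>i * p + j\<close>. Over \<open>B = A\<^sup>p\<close>, a system for the
  product becomes a system for the first factor whose components are systems for the second.\<close>
lemma Gamma_product:
  assumes G1: "Gamma S n m \<delta>" and G2: "Gamma S p m \<epsilon>" and R1: "trans_closed n m \<delta>" and R2: "trans_closed p m \<epsilon>"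
  and n0: "0 < n" and p0: "0 < p" and m0: "0 < m"
  shows "Gamma S (n * p) m (\<lambda>I a. \<delta> (I div p) a * p + \<epsilon> (I mod p) a)"
  unfolding Gamma_iff
proof (intro allI impI, elim conjE)
  fix A C f assume f: "dm f = pw A m \<otimes> C" "cd f = A"
  define B where "B = pw A p"
  have cm[simp]: "pw B m = pw A (m * p)" "pw B n = pw A (n * p)"
    using pw_mult n0 m0 p0 by (simp_all add: B_def)
  have cB[simp]: "pw A p = B" by (simp add: B_def)
  define \<delta>P where "\<delta>P = (\<lambda>I a. \<delta> (I div p) a * p + \<epsilon> (I mod p) a)"
  have RP: "trans_closed (n * p) m \<delta>P"
    unfolding \<delta>P_def by (rule trans_closed_product[OF R1 R2 p0])
  define F where "F = tuple p (\<lambda>j. f \<cdot> cross (reindex A (m * p) (\<lambda>a. a * p + \<epsilon> j a) m) (idm C))"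
  have ix: "\<And>j a. j < p \<Longrightarrow> a < m \<Longrightarrow> a * p + \<epsilon> j a < m * p"
    using R2 by (intro mult_add_less) (auto simp: trans_closed_def)
  have F_ty: "dm F = pw B m \<otimes> C" "cd F = B" using f ix p0 m0 by (simp_all add: F_def)
  have key: "\<And>i j. i < n \<Longrightarrow> j < p \<Longrightarrow>
      reindex A (m * p) (\<lambda>a. a * p + \<epsilon> j a) m \<cdot> reindex B n (\<delta> i) m = reindex A (n * p) (\<lambda>a. \<delta> i a * p + \<epsilon> j a) m"
  proof -
    fix i j assume i: "i < n" and j: "j < p"
    have ra: "\<And>a. a < m \<Longrightarrow> \<delta> i a < n" using R1 i by (simp add: trans_closed_def)
    have re: "\<And>a. a < m \<Longrightarrow> \<epsilon> j a < p" using R2 j by (simp add: trans_closed_def)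
    show "reindex A (m * p) (\<lambda>a. a * p + \<epsilon> j a) m \<cdot> reindex B n (\<delta> i) m = reindex A (n * p) (\<lambda>a. \<delta> i a * p + \<epsilon> j a) m"
    proof (rule tuple_ext[of m _ A])
      fix a assume a: "a < m"
      have "prj A m a \<cdot> (reindex A (m * p) (\<lambda>a. a * p + \<epsilon> j a) m \<cdot> reindex B n (\<delta> i) m) = prj A (m * p) (a * p + \<epsilon> j a) \<cdot> reindex B n (\<delta> i) m"
        using a ix j ra m0 by simp
      also have "\<dots> = prj A p (\<epsilon> j a) \<cdot> prj B m a \<cdot> reindex B n (\<delta> i) m"
        using prj_mult[OF a re[OF a], of A] a re ra m0 by simp
      also have "\<dots> = prj A p (\<epsilon> j a) \<cdot> prj B n (\<delta> i a)" using a re ra m0 by simp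
      also have "\<dots> = prj A (n * p) (\<delta> i a * p + \<epsilon> j a)"
        using prj_mult[OF ra[OF a] re[OF a], of A] by simp
      also have "\<dots> = prj A m a \<cdot> reindex A (n * p) (\<lambda>a. \<delta> i a * p + \<epsilon> j a) m"
        using a ra re m0 mult_add_less by simp
      finally show "prj A m a \<cdot> (reindex A (m * p) (\<lambda>a. a * p + \<epsilon> j a) m \<cdot> reindex B n (\<delta> i) m) = prj A m a \<cdot> reindex A (n * p) (\<lambda>a. \<delta> i a * p + \<epsilon> j a) m" .
    qed (use m0 ra re ix j mult_add_less in auto)
  qed
  have fq_split: "fq n m \<delta> B C F = fq (n * p) m \<delta>P A C f"
  proof (rule tuple_ext[of "n * p" _ A])
    fix I assume I: "I < n * p"
    define i where "i = I div p"
    define j where "j = I mod p"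
    have i: "i < n" using I p0 by (simp add: i_def div_less_iff_less_mult)
    have j: "j < p" using p0 by (simp add: j_def)
    have "prj A (n * p) I \<cdot> fq n m \<delta> B C F = prj A p j \<cdot> prj B n i \<cdot> fq n m \<delta> B C F"
      using prj_mult_div_mod[OF I, of A] i R1 F_ty m0 by (simp add: i_def j_def)
    also have "\<dots> = prj A p j \<cdot> F \<cdot> cross (reindex B n (\<delta> i) m) (idm C)"
      using i j R1 F_ty m0 by simp
    also have "\<dots> = f \<cdot> cross (reindex A (m * p) (\<lambda>a. a * p + \<epsilon> j a) m \<cdot> reindex B n (\<delta> i) m) (idm C)"
      using i j R1 f m0 ix unfolding F_def by (simp add: trans_closed_def)
    also have "\<dots> = f \<cdot> cross (reindex A (n * p) (\<delta>P I) m) (idm C)"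
      using key[OF i j] by (simp add: \<delta>P_def i_def j_def)
    also have "\<dots> = prj A (n * p) I \<cdot> fq (n * p) m \<delta>P A C f"
      using I RP f m0 by simp
    finally show "prj A (n * p) I \<cdot> fq n m \<delta> B C F = prj A (n * p) I \<cdot> fq (n * p) m \<delta>P A C f" .
  qed (use n0 p0 m0 R1 F_ty RP f in auto)
  have Gamma_first: "dagger (pw B n) C (fq n m \<delta> B C F) = diag B n \<cdot> dagger B C (F \<cdot> cross (diag B m) (idm C))"
    using G1 F_ty unfolding Gamma_iff by blast
  have inner_system: "F \<cdot> cross (diag B m) (idm C) = fq p m \<epsilon> A C f"
    unfolding F_def fq_tuple
  proof (subst tuple_comp)
    show "tuple p (\<lambda>i. f \<cdot> cross (reindex A (m * p) (\<lambda>a. a * p + \<epsilon> i a) m) (idm C) \<cdot> cross (diag B m) (idm C)) = tuple p (\<lambda>i. f \<cdot> cross (reindex A p (\<epsilon> i) m) (idm C))"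
    proof (rule tuple_cong)
      fix j assume j: "j < p"
      have re: "\<And>a. a < m \<Longrightarrow> \<epsilon> j a < p" using R2 j by (simp add: trans_closed_def)
      have "reindex A (m * p) (\<lambda>a. a * p + \<epsilon> j a) m \<cdot> diag B m = reindex A p (\<epsilon> j) m"
      proof (rule tuple_ext[of m _ A])
        fix a assume a: "a < m"
        have "prj A m a \<cdot> (reindex A (m * p) (\<lambda>a. a * p + \<epsilon> j a) m \<cdot> diag B m) = prj A (m * p) (a * p + \<epsilon> j a) \<cdot> diag B m"
          using a ix j m0 by simp
        also have "\<dots> = prj A p (\<epsilon> j a) \<cdot> prj B m a \<cdot> diag B m"
          using prj_mult[OF a re[OF a], of A] by simp
        also have "\<dots> = prj A p (\<epsilon> j a)" using a re m0 by simp
        also have "\<dots> = prj A m a \<cdot> reindex A p (\<epsilon> j) m" using a re by simp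
        finally show "prj A m a \<cdot> (reindex A (m * p) (\<lambda>a. a * p + \<epsilon> j a) m \<cdot> diag B m) = prj A m a \<cdot> reindex A p (\<epsilon> j) m" .
      qed (use m0 ix j re in auto)
      then show "f \<cdot> cross (reindex A (m * p) (\<lambda>a. a * p + \<epsilon> j a) m) (idm C) \<cdot> cross (diag B m) (idm C) = f \<cdot> cross (reindex A p (\<epsilon> j) m) (idm C)"
        using f m0 ix j by simp
    qed
  qed (use f m0 ix p0 in auto)
  have Gamma_second: "dagger B C (fq p m \<epsilon> A C f) = diag A p \<cdot> dagger A C (f \<cdot> cross (diag A m) (idm C))"
    using G2 f unfolding Gamma_iff B_def by blast
  have diag_split: "diag B n \<cdot> diag A p = diag A (n * p)"
    unfolding B_def by (rule diag_diag[OF n0 p0])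
  show "dagger (pw A (n * p)) C (fq (n * p) m (\<lambda>I a. \<delta> (I div p) a * p + \<epsilon> (I mod p) a) A C f) =
        diag A (n * p) \<cdot> dagger A C (f \<cdot> cross (diag A m) (idm C))"
    using fq_split Gamma_first inner_system Gamma_second diag_split f n0 p0 m0
    unfolding \<delta>P_def[symmetric] by simp
qed

text \<open>The letter \<open>m1 + a * m2 + b\<close> acts as the two-letter word \<open>a (m1 + b)\<close>. The proof works over
  \<open>B = A\<^bsup>m2 + 1\<^esup>\<close>: component \<open>0\<close> of the auxiliary system is \<open>f\<close>, component \<open>c > 0\<close> copies component
  \<open>0\<close> at the state reached by letter \<open>m1 + c - 1\<close>; \<open>\<Gamma>\<close> applies to it, and the copies are then
  eliminated by \<open>dagger_reindex\<close>.\<close>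
lemma Gamma_letter_pairs:
  assumes G: "Gamma S n (m1 + m2) \<delta>" and R: "trans_closed n (m1 + m2) \<delta>" and n0: "0 < n" and m10: "0 < m1" and m20: "0 < m2"
  shows "Gamma S n (m1 + m1 * m2) (\<lambda>i j. if j < m1 then \<delta> i j else \<delta> (\<delta> i ((j - m1) div m2)) (m1 + (j - m1) mod m2))"
  unfolding Gamma_iff
proof (intro allI impI, elim conjE)
  fix A C f
  define k where "k = m1 + m1 * m2"
  assume f: "dm f = pw A (m1 + m1 * m2) \<otimes> C" "cd f = A"
  then have fk: "dm f = pw A k \<otimes> C" by (simp add: k_def)
  define \<delta>' where "\<delta>' = (\<lambda>i j. if j < m1 then \<delta> i j else \<delta> (\<delta> i ((j - m1) div m2)) (m1 + (j - m1) mod m2))"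
  define Rr where "Rr = Suc m2"
  define M where "M = m1 + m2"
  define B where "B = pw A Rr"
  have k0: "0 < k" and M0: "0 < M" and R0: "0 < Rr" using m10 by (simp_all add: k_def M_def Rr_def)
  have cm[simp]: "pw B M = pw A (M * Rr)" "pw B n = pw A (n * Rr)"
    using pw_mult n0 M0 R0 by (simp_all add: B_def)
  have cB[simp]: "pw A Rr = B" by (simp add: B_def)
  define \<mu>d where "\<mu>d a = (if a < m1 then a else (a - m1) div m2)" for a
  define \<mu>m where "\<mu>m a = (if a < m1 then 0 else Suc ((a - m1) mod m2))" for a
  have \<mu>d_lt: "\<And>a. a < k \<Longrightarrow> \<mu>d a < M"
  proof -
    fix a assume a: "a < k"
    show "\<mu>d a < M"
    proof (cases "a < m1")
      case False
      then have "a - m1 < m1 * m2" using a by (simp add: k_def)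
      then have "(a - m1) div m2 < m1" using m20 by (simp add: div_less_iff_less_mult mult.commute)
      then show ?thesis using False by (simp add: \<mu>d_def M_def)
    qed (simp add: \<mu>d_def M_def)
  qed
  have \<mu>m_lt: "\<And>a. \<mu>m a < Rr" using m20 by (simp add: \<mu>m_def Rr_def)
  define \<mu> where "\<mu> a = \<mu>d a * Rr + \<mu>m a" for a
  have \<mu>_lt: "\<And>a. a < k \<Longrightarrow> \<mu> a < M * Rr" using \<mu>d_lt \<mu>m_lt mult_add_less by (simp add: \<mu>_def)
  have prj\<mu>: "\<And>a. a < k \<Longrightarrow> prj A (M * Rr) (\<mu> a) = prj A Rr (\<mu>m a) \<cdot> prj B M (\<mu>d a)"
  proof -
    fix a assume a: "a < k"
    show "prj A (M * Rr) (\<mu> a) = prj A Rr (\<mu>m a) \<cdot> prj B M (\<mu>d a)"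
      using prj_mult[OF \<mu>d_lt[OF a] \<mu>m_lt, of A] unfolding \<mu>_def by simp
  qed
  have rM: "\<And>c. 0 < c \<Longrightarrow> c < Rr \<Longrightarrow> m1 + c - 1 < M" by (simp add: M_def Rr_def)
  have prj_copy: "\<And>c. 0 < c \<Longrightarrow> c < Rr \<Longrightarrow> prj A (M * Rr) ((m1 + c - 1) * Rr) = prj A Rr 0 \<cdot> prj B M (m1 + c - 1)"
  proof -
    fix c assume c: "0 < c" "c < Rr"
    show "prj A (M * Rr) ((m1 + c - 1) * Rr) = prj A Rr 0 \<cdot> prj B M (m1 + c - 1)"
      using prj_mult[OF rM[OF c] R0, of A] by simp
  qed
  define F where "F = tuple Rr (\<lambda>c. if c = 0 then f \<cdot> cross (reindex A (M * Rr) \<mu> k) (idm C) else prj A (M * Rr) ((m1 + c - 1) * Rr) \<cdot> pr1 (pw A (M * Rr)) C)"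
  have rMR: "\<And>c. 0 < c \<Longrightarrow> c < Rr \<Longrightarrow> (m1 + c - 1) * Rr < M * Rr" using rM R0 by simp
  have Ff_ty: "\<And>c. c < Rr \<Longrightarrow> dm (if c = 0 then f \<cdot> cross (reindex A (M * Rr) \<mu> k) (idm C) else prj A (M * Rr) ((m1 + c - 1) * Rr) \<cdot> pr1 (pw A (M * Rr)) C) = pw A (M * Rr) \<otimes> C \<and>
     cd (if c = 0 then f \<cdot> cross (reindex A (M * Rr) \<mu> k) (idm C) else prj A (M * Rr) ((m1 + c - 1) * Rr) \<cdot> pr1 (pw A (M * Rr)) C) = A"
    using fk f(2) k0 \<mu>_lt rMR by auto
  have F_ty: "dm F = pw A (M * Rr) \<otimes> C" "cd F = B"
  proof -
    show "dm F = pw A (M * Rr) \<otimes> C" unfolding F_def by (rule tuple_dom[OF R0]) (use Ff_ty in blast)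
    have "cd F = pw A Rr" unfolding F_def by (rule tuple_cod[OF R0]) (use Ff_ty in blast)+
    then show "cd F = B" by simp
  qed
  have F0: "prj A Rr 0 \<cdot> F = f \<cdot> cross (reindex A (M * Rr) \<mu> k) (idm C)"
    unfolding F_def using f k0 \<mu>_lt rMR R0 by (subst prj_tuple) (auto simp: k_def)
  have Fc: "\<And>c. 0 < c \<Longrightarrow> c < Rr \<Longrightarrow> prj A Rr c \<cdot> F = prj A (M * Rr) ((m1 + c - 1) * Rr) \<cdot> pr1 (pw A (M * Rr)) C"
    unfolding F_def using f k0 \<mu>_lt rMR R0 by (subst prj_tuple) (auto simp: k_def)
  define H where "H = fq n M \<delta> B C F"
  have RM: "trans_closed n M \<delta>" using R by (simp add: M_def)
  have H_ty: "dm H = pw A (n * Rr) \<otimes> C" "cd H = pw A (n * Rr)"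
    using F_ty RM n0 M0 by (simp_all add: H_def)
  define K where "K = F \<cdot> cross (diag B M) (idm C)"
  have K_ty: "dm K = B \<otimes> C" "cd K = B" using F_ty M0 by (simp_all add: K_def)
  have GH: "dagger (pw A (n * Rr)) C H = diag B n \<cdot> dagger B C K"
    using G F_ty unfolding Gamma_iff H_def K_def M_def[symmetric] by (metis cm)
  define k0' where "k0' = dagger A C (f \<cdot> cross (diag A k) (idm C))"
  have K0: "prj A Rr 0 \<cdot> K = f \<cdot> cross (reindex A Rr \<mu>m k) (idm C)"
  proof -
    have "reindex A (M * Rr) \<mu> k \<cdot> diag B M = reindex A Rr \<mu>m k"
    proof (rule tuple_ext[of k _ A])
      fix a assume a: "a < k"
      have "prj A k a \<cdot> (reindex A (M * Rr) \<mu> k \<cdot> diag B M) = prj A Rr (\<mu>m a) \<cdot> prj B M (\<mu>d a) \<cdot> diag B M"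
        using a \<mu>_lt prj\<mu>[OF a] M0 by simp
      also have "\<dots> = prj A Rr (\<mu>m a)" using \<mu>d_lt[OF a] \<mu>m_lt by simp
      finally show "prj A k a \<cdot> (reindex A (M * Rr) \<mu> k \<cdot> diag B M) = prj A k a \<cdot> reindex A Rr \<mu>m k"
        using a \<mu>m_lt by simp
    qed (use k0 \<mu>_lt M0 \<mu>m_lt in auto)
    note bd = this
    have "prj A Rr 0 \<cdot> K = prj A Rr 0 \<cdot> F \<cdot> cross (diag B M) (idm C)"
      unfolding K_def using F_ty M0 R0 by (subst comp_assoc) auto
    also have "\<dots> = f \<cdot> cross (reindex A (M * Rr) \<mu> k) (idm C) \<cdot> cross (diag B M) (idm C)"
      by (simp only: F0)
    also have "\<dots> = f \<cdot> cross (reindex A Rr \<mu>m k) (idm C)" using fk k0 \<mu>_lt M0 bd by simp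
    finally show ?thesis .
  qed
  have Kc: "\<And>c. 0 < c \<Longrightarrow> c < Rr \<Longrightarrow> prj A Rr c \<cdot> K = prj A Rr 0 \<cdot> pr1 B C"
  proof -
    fix c assume c: "0 < c" "c < Rr"
    have "prj A Rr c \<cdot> K = prj A (M * Rr) ((m1 + c - 1) * Rr) \<cdot> pr1 (pw A (M * Rr)) C \<cdot> cross (diag B M) (idm C)"
      using Fc[OF c] F_ty c M0 unfolding K_def by (subst comp_assoc) auto
    also have "\<dots> = prj A Rr 0 \<cdot> prj B M (m1 + c - 1) \<cdot> diag B M \<cdot> pr1 B C"
      using prj_copy[OF c] rMR[OF c] M0 by (simp add: cross_def')
    also have "\<dots> = prj A Rr 0 \<cdot> pr1 B C" using rM[OF c] R0 by simp
    finally show "prj A Rr c \<cdot> K = prj A Rr 0 \<cdot> pr1 B C" .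
  qed
  have "prj A Rr 0 \<cdot> K \<cdot> cross (diag A Rr) (idm C) = f \<cdot> cross (reindex A Rr \<mu>m k \<cdot> diag A Rr) (idm C)"
    using K0 K_ty R0 f k0 \<mu>m_lt by (simp add: fk)
  also have "\<dots> = f \<cdot> cross (diag A k) (idm C)" using reindex_diag[OF k0 R0, of \<mu>m A] \<mu>m_lt by simp
  finally have Kd: "dagger B C K = diag A Rr \<cdot> k0'"
    using dagger_copies[of Rr K A C] R0 K_ty Kc unfolding k0'_def by simp
  have k0'_ty: "dm k0' = C" "cd k0' = A" using f k0 by (simp_all add: k0'_def fk)
  have Hd: "dagger (pw A (n * Rr)) C H = diag A (n * Rr) \<cdot> k0'"
    using GH Kd diag_diag[OF n0 R0, of A] k0'_ty n0 R0 by simp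
  define \<alpha> where "\<alpha> q = q * Rr" for q
  define \<beta> where "\<beta> I = (if I mod Rr = 0 then I div Rr else \<delta> (I div Rr) (m1 + I mod Rr - 1))" for I
  have nR0: "0 < n * Rr" using n0 R0 by simp
  have \<alpha>inj: "inj_on \<alpha> {..<n}" using R0 by (auto simp: inj_on_def \<alpha>_def)
  have \<alpha>lt: "\<forall>q<n. \<alpha> q < n * Rr" using R0 by (auto simp: \<alpha>_def)
  have \<beta>\<alpha>: "\<forall>q<n. \<beta> (\<alpha> q) = q" using R0 by (auto simp: \<alpha>_def \<beta>_def)
  have \<beta>xc: "\<And>x c. c < Rr \<Longrightarrow> \<beta> (x * Rr + c) = (if c = 0 then x else \<delta> x (m1 + c - 1))"
    by (simp add: \<beta>_def)
  have \<beta>lt: "\<forall>I<n * Rr. \<beta> I < n"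
  proof (intro allI impI)
    fix I assume I: "I < n * Rr"
    have q: "I div Rr < n" using I R0 by (simp add: div_less_iff_less_mult)
    have c: "I mod Rr < Rr" using R0 by simp
    show "\<beta> I < n"
    proof (cases "I mod Rr = 0")
      case True then show ?thesis using q by (simp add: \<beta>_def)
    next
      case False
      then have "m1 + I mod Rr - 1 < m1 + m2" using c rM[of "I mod Rr"] by (simp add: M_def)
      then show ?thesis using False q R by (simp add: \<beta>_def trans_closed_def)
    qed
  qed
  have elim: "\<forall>I<n * Rr. I \<notin> \<alpha> ` {..<n} \<longrightarrow> prj A (n * Rr) I \<cdot> H = prj A (n * Rr) (\<alpha> (\<beta> I)) \<cdot> pr1 (pw A (n * Rr)) C"
  proof (intro allI impI)
    fix I assume I: "I < n * Rr" and nI: "I \<notin> \<alpha> ` {..<n}"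
    define q where "q = I div Rr"
    define c where "c = I mod Rr"
    have q: "q < n" using I R0 by (simp add: div_less_iff_less_mult q_def)
    have cR: "c < Rr" using R0 by (simp add: c_def)
    have c0: "0 < c"
    proof (rule ccontr)
      assume "\<not> 0 < c"
      then have "I = \<alpha> q" using div_mult_mod_eq[of I Rr] by (simp add: c_def q_def \<alpha>_def)
      then show False using nI q by auto
    qed
    have Iqc: "I = q * Rr + c" by (simp add: q_def c_def)
    have dq: "\<delta> q (m1 + c - 1) < n" using R q rM[OF c0 cR] by (simp add: trans_closed_def M_def)
    have "prj A (n * Rr) I \<cdot> H = prj A Rr c \<cdot> prj B n q \<cdot> H"
      using prj_mult_div_mod[OF I, of A] by (simp add: q_def c_def)
    also have "\<dots> = prj A Rr c \<cdot> F \<cdot> cross (reindex B n (\<delta> q) M) (idm C)"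
      unfolding H_def using q RM F_ty cR M0 by simp
    also have "\<dots> = prj A (M * Rr) ((m1 + c - 1) * Rr) \<cdot> pr1 (pw A (M * Rr)) C \<cdot> cross (reindex B n (\<delta> q) M) (idm C)"
      using Fc[OF c0 cR] by simp
    also have "\<dots> = prj A Rr 0 \<cdot> prj B M (m1 + c - 1) \<cdot> reindex B n (\<delta> q) M \<cdot> pr1 (pw A (n * Rr)) C"
      using prj_copy[OF c0 cR] rMR[OF c0 cR] M0 q RM by (simp add: cross_def' trans_closed_def)
    also have "\<dots> = prj A Rr 0 \<cdot> prj B n (\<delta> q (m1 + c - 1)) \<cdot> pr1 (pw A (n * Rr)) C"
      using rM[OF c0 cR] M0 q RM R0 by (simp add: trans_closed_def)
    also have "\<dots> = prj A (n * Rr) (\<alpha> (\<beta> I)) \<cdot> pr1 (pw A (n * Rr)) C"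
      using prj_mult[OF dq R0, of A] \<beta>xc[OF cR, of q] c0 unfolding Iqc by (simp add: \<alpha>_def)
    finally show "prj A (n * Rr) I \<cdot> H = prj A (n * Rr) (\<alpha> (\<beta> I)) \<cdot> pr1 (pw A (n * Rr)) C" .
  qed
  have BG: "reindex A (n * Rr) \<alpha> n \<cdot> dagger (pw A (n * Rr)) C H = dagger (pw A n) C (reindex A (n * Rr) \<alpha> n \<cdot> H \<cdot> cross (reindex A n \<beta> (n * Rr)) (idm C))"
  proof (rule dagger_reindex[OF n0 _ \<alpha>inj \<alpha>lt \<beta>\<alpha> \<beta>lt H_ty])
    show "n \<le> n * Rr" using R0 by simp
  qed (use elim in blast)
  have lhs: "reindex A (n * Rr) \<alpha> n \<cdot> dagger (pw A (n * Rr)) C H = diag A n \<cdot> k0'"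
    using Hd reindex_diag[OF n0 nR0, of \<alpha> A] \<alpha>lt k0'_ty n0 nR0 by simp
  have Rk: "trans_closed n k \<delta>'"
    using trans_closed_letter_pairs[OF R m20] by (simp add: \<delta>'_def k_def)
  have key: "\<And>q. q < n \<Longrightarrow> reindex A (M * Rr) \<mu> k \<cdot> reindex B n (\<delta> q) M \<cdot> reindex A n \<beta> (n * Rr) = reindex A n (\<delta>' q) k"
  proof -
    fix q assume q: "q < n"
    have dq: "\<And>j. j < M \<Longrightarrow> \<delta> q j < n" using R q by (simp add: trans_closed_def M_def)
    show "reindex A (M * Rr) \<mu> k \<cdot> reindex B n (\<delta> q) M \<cdot> reindex A n \<beta> (n * Rr) = reindex A n (\<delta>' q) k"
    proof (rule tuple_ext[of k _ A])
      fix a assume a: "a < k"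
      have "prj A k a \<cdot> (reindex A (M * Rr) \<mu> k \<cdot> reindex B n (\<delta> q) M \<cdot> reindex A n \<beta> (n * Rr)) = prj A (M * Rr) (\<mu> a) \<cdot> reindex B n (\<delta> q) M \<cdot> reindex A n \<beta> (n * Rr)"
        using a \<mu>_lt dq M0 \<beta>lt nR0 by simp
      also have "\<dots> = prj A Rr (\<mu>m a) \<cdot> prj B M (\<mu>d a) \<cdot> reindex B n (\<delta> q) M \<cdot> reindex A n \<beta> (n * Rr)"
        by (simp only: prj\<mu>[OF a])
      also have "\<dots> = prj A Rr (\<mu>m a) \<cdot> prj B n (\<delta> q (\<mu>d a)) \<cdot> reindex A n \<beta> (n * Rr)"
        using \<mu>d_lt[OF a] dq M0 \<mu>m_lt by simp
      also have "\<dots> = prj A (n * Rr) (\<delta> q (\<mu>d a) * Rr + \<mu>m a) \<cdot> reindex A n \<beta> (n * Rr)"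
        using prj_mult[OF dq[OF \<mu>d_lt[OF a]] \<mu>m_lt, of A] by simp
      also have "\<dots> = prj A n (\<beta> (\<delta> q (\<mu>d a) * Rr + \<mu>m a))"
        using \<beta>lt nR0 mult_add_less[OF dq[OF \<mu>d_lt[OF a]] \<mu>m_lt] by simp
      also have "\<dots> = prj A n (\<delta>' q a)"
        using \<beta>xc[OF \<mu>m_lt] by (simp add: \<mu>m_def \<mu>d_def \<delta>'_def)
      also have "\<dots> = prj A k a \<cdot> reindex A n (\<delta>' q) k" using a Rk q by (simp add: trans_closed_def)
      finally show "prj A k a \<cdot> (reindex A (M * Rr) \<mu> k \<cdot> reindex B n (\<delta> q) M \<cdot> reindex A n \<beta> (n * Rr)) = prj A k a \<cdot> reindex A n (\<delta>' q) k" .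
    qed (use k0 \<mu>_lt dq M0 \<beta>lt nR0 Rk q in \<open>auto simp: trans_closed_def\<close>)
  qed
  have rhs: "reindex A (n * Rr) \<alpha> n \<cdot> H \<cdot> cross (reindex A n \<beta> (n * Rr)) (idm C) = fq n k \<delta>' A C f"
  proof (rule tuple_ext[of n _ A])
    fix q assume q: "q < n"
    have "prj A n q \<cdot> (reindex A (n * Rr) \<alpha> n \<cdot> H \<cdot> cross (reindex A n \<beta> (n * Rr)) (idm C)) = prj A (n * Rr) (q * Rr) \<cdot> H \<cdot> cross (reindex A n \<beta> (n * Rr)) (idm C)"
      using q \<alpha>lt H_ty \<beta>lt nR0 by (simp add: \<alpha>_def)
    also have "\<dots> = prj A Rr 0 \<cdot> prj B n q \<cdot> H \<cdot> cross (reindex A n \<beta> (n * Rr)) (idm C)"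
      using prj_mult[OF q R0, of A] by simp
    also have "\<dots> = prj A Rr 0 \<cdot> F \<cdot> cross (reindex B n (\<delta> q) M) (idm C) \<cdot> cross (reindex A n \<beta> (n * Rr)) (idm C)"
      unfolding H_def using q RM F_ty R0 M0 by simp
    also have "\<dots> = f \<cdot> cross (reindex A (M * Rr) \<mu> k) (idm C) \<cdot> cross (reindex B n (\<delta> q) M) (idm C) \<cdot> cross (reindex A n \<beta> (n * Rr)) (idm C)"
      by (simp only: F0)
    also have "\<dots> = f \<cdot> cross (reindex A n (\<delta>' q) k) (idm C)"
      using key[OF q] fk k0 \<mu>_lt RM q M0 \<beta>lt nR0 by (simp add: trans_closed_def)
    also have "\<dots> = prj A n q \<cdot> fq n k \<delta>' A C f" using q Rk fk f k0 by simp
    finally show "prj A n q \<cdot> (reindex A (n * Rr) \<alpha> n \<cdot> H \<cdot> cross (reindex A n \<beta> (n * Rr)) (idm C)) = prj A n q \<cdot> fq n k \<delta>' A C f" .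
  qed (use n0 \<alpha>lt H_ty \<beta>lt nR0 Rk fk f k0 in auto)
  show "dagger (pw A n) C (fq n (m1 + m1 * m2) (\<lambda>i j. if j < m1 then \<delta> i j else \<delta> (\<delta> i ((j - m1) div m2)) (m1 + (j - m1) mod m2)) A C f) =
       diag A n \<cdot> dagger A C (f \<cdot> cross (diag A (m1 + m1 * m2)) (idm C))"
    using BG lhs rhs unfolding \<delta>'_def[symmetric] k_def[symmetric] k0'_def by simp
qed

lemma Gamma_pow_trans:
  "Gamma S n m \<delta> \<Longrightarrow> trans_closed n m \<delta> \<Longrightarrow> 0 < n \<Longrightarrow> 0 < m \<Longrightarrow> Gamma S (n ^ Suc j) m (pow_trans n \<delta> j)"
proof (induction j)
  case 0 then show ?case by simp
next
  case (Suc j)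
  have "Gamma S (n * n ^ Suc j) m (\<lambda>I a. \<delta> (I div n ^ Suc j) a * n ^ Suc j + pow_trans n \<delta> j (I mod n ^ Suc j) a)"
    using Suc.prems
    by (intro Gamma_product[OF Suc.prems(1) Suc.IH[OF Suc.prems] Suc.prems(2)
          pow_trans_closed[OF Suc.prems(2,3)] Suc.prems(3) _ Suc.prems(4)]) simp
  then show ?case by (simp only: pow_trans.simps power_Suc[of n "Suc j"])
qed

lemma Gamma_word_enum: "Gamma S N m P \<Longrightarrow> trans_closed N m P \<Longrightarrow> 0 < N \<Longrightarrow> 0 < m \<Longrightarrow>
  Gamma S N (num_words m L) (\<lambda>I j. foldl P I (word_enum m L j)) \<and> trans_closed N (num_words m L) (\<lambda>I j. foldl P I (word_enum m L j))"
proof (induction L)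
  case 0
  have "Gamma S N (num_words m 0) (\<lambda>I j. foldl P I (word_enum m 0 j)) = Gamma S N m P"
    unfolding num_words.simps by (rule Gamma_cong) simp
  then show ?case using 0 by (simp add: trans_closed_def)
next
  case (Suc L)
  define c where "c = num_words m L"
  define WL where "WL = (\<lambda>I j. foldl P I (word_enum m L j))"
  have GL: "Gamma S N c WL" and RL: "trans_closed N c WL" using Suc by (simp_all add: c_def WL_def)
  have mc: "m \<le> c" using num_words_ge by (simp add: c_def)
  have c0: "0 < c" using mc Suc.prems by simp
  define \<delta>in where "\<delta>in = (\<lambda>I j. if j < m then P I j else WL I (j - m))"
  have Rin: "trans_closed N (m + c) \<delta>in"
    using Suc.prems(2) RL by (auto simp: trans_closed_def \<delta>in_def)
  have G1: "Gamma S N (m + c) \<delta>in"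
  proof (rule Gamma_letter_map[OF GL Suc.prems(3) _ _ RL])
    show "0 < m + c" using c0 by simp
    show "\<forall>j<m + c. (if j < m then j else j - m) < c" using mc by auto
    show "\<forall>i<N. \<forall>j<m + c. \<delta>in i j = WL i (if j < m then j else j - m)"
      by (auto simp: \<delta>in_def WL_def word_enum_letter)
  qed
  note G2 = Gamma_letter_pairs[OF G1 Rin Suc.prems(3) Suc.prems(4) c0]
  have eq: "\<And>I j. I < N \<Longrightarrow> j < m + m * c \<Longrightarrow>
     (if j < m then \<delta>in I j else \<delta>in (\<delta>in I ((j - m) div c)) (m + (j - m) mod c)) = foldl P I (word_enum m (Suc L) j)"
  proof -
    fix I j assume I: "I < N" and j: "j < m + m * c"
    show "(if j < m then \<delta>in I j else \<delta>in (\<delta>in I ((j - m) div c)) (m + (j - m) mod c)) = foldl P I (word_enum m (Suc L) j)"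
    proof (cases "j < m")
      case False
      have "j - m < m * c" using j False by simp
      then have "(j - m) div c < m" using c0 by (simp add: div_less_iff_less_mult)
      moreover have "(j - m) mod c < c" using c0 by simp
      ultimately show ?thesis using False by (simp add: \<delta>in_def WL_def c_def)
    qed (simp add: \<delta>in_def)
  qed
  have "Gamma S N (num_words m (Suc L)) (\<lambda>I j. foldl P I (word_enum m (Suc L) j))"
    using G2 Gamma_cong[of N "m + m * c", OF eq] by (simp add: c_def)
  moreover have "trans_closed N (num_words m (Suc L)) (\<lambda>I j. foldl P I (word_enum m (Suc L) j))"
    unfolding trans_closed_def
  proof (intro allI impI)
    fix i j assume "i < N" "j < num_words m (Suc L)"
    then show "foldl P i (word_enum m (Suc L) j) < N"
      using foldl_trans_closed[OF Suc.prems(2)] word_enum_set[OF Suc.prems(4)] by blast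
  qed
  ultimately show ?case ..
qed

lemma Gamma_word_letters:
  assumes G: "Gamma S N m P" and R: "trans_closed N m P" and N0: "0 < N" and m0: "0 < m" and k0: "0 < k"
    and ws: "\<And>t. t < k \<Longrightarrow> set (ws t) \<subseteq> {..<m}"
  shows "Gamma S N k (\<lambda>I t. foldl P I (ws t))"
proof -
  define L where "L = Max ((\<lambda>t. length (ws t)) ` {..<k})"
  have wsL: "\<And>t. t < k \<Longrightarrow> length (ws t) \<le> Suc L"
    unfolding L_def by (metis Max_ge finite_imageI finite_lessThan imageI lessThan_iff le_SucI)
  define WL where "WL = (\<lambda>I j. foldl P I (word_enum m L j))"
  have GL: "Gamma S N (num_words m L) WL" and RL: "trans_closed N (num_words m L) WL"
    using Gamma_word_enum[OF G R N0 m0, of L] by (simp_all add: WL_def)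
  have "0 < num_words m L" using num_words_ge[of m L] m0 by simp
  then have G1: "Gamma S N (Suc (num_words m L)) (\<lambda>I j. if j = 0 then I else WL I (j - 1))"
    by (rule Gamma_identity_letter[OF GL RL N0])
  have R1: "trans_closed N (Suc (num_words m L)) (\<lambda>I j. if j = 0 then I else WL I (j - 1))"
    using RL by (auto simp: trans_closed_def)
  define idx where "idx t = (if ws t = [] then 0 else Suc (SOME j. j < num_words m L \<and> word_enum m L j = ws t))" for t
  have idx: "idx t < Suc (num_words m L) \<and> (\<forall>I. (if idx t = 0 then I else WL I (idx t - 1)) = foldl P I (ws t))"
    if t: "t < k" for t
  proof (cases "ws t = []")
    case False
    have "\<exists>j<num_words m L. word_enum m L j = ws t"
      using word_enum_surj[OF False ws[OF t] wsL[OF t]] .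
    then have "(SOME j. j < num_words m L \<and> word_enum m L j = ws t) < num_words m L \<and>
        word_enum m L (SOME j. j < num_words m L \<and> word_enum m L j = ws t) = ws t"
      by (metis (mono_tags, lifting) someI_ex)
    then show ?thesis using False by (simp add: idx_def WL_def)
  qed (simp add: idx_def)
  show ?thesis
    by (rule Gamma_letter_map[OF G1 N0 k0 _ R1, where lm = idx]) (use idx in simp_all)
qed

lemma Gamma_trans_monoid_subautomaton:
  fixes e :: "nat \<Rightarrow> nat \<Rightarrow> nat"
  assumes aut: "automaton n m \<delta>"
    and G: "Gamma S (n ^ n) k (\<lambda>I t. foldl (pow_trans n \<delta> (n - 1)) I (ws t))"
    and e: "bij_betw e {0..<k} (trans_monoid n m \<delta>)"
    and ws: "\<And>t. t < k \<Longrightarrow> set (ws t) \<subseteq> {0..<m} \<and> e t = word_trans n \<delta> (ws t)"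
  shows "Gamma S k k (\<lambda>i j. the_inv_into {0..<k} e (tm_mult (e i) (e j)))"
proof (rule Gamma_subautomaton[OF G])
  have e_in: "e s \<in> trans_monoid n m \<delta>" if "s < k" for s
    using that by (intro bij_betwE[OF e, rule_format]) simp
  have R: "trans_closed n m \<delta>" and n0: "0 < n"
    using aut by (auto simp: automaton_def trans_closed_def)
  show "trans_closed (n ^ n) k (\<lambda>I t. foldl (pow_trans n \<delta> (n - 1)) I (ws t))"
    using foldl_trans_closed[OF pow_trans_closed[OF R n0, of "n - 1"]] ws n0
    by (auto simp: trans_closed_def atLeast0LessThan)
  show "0 < k" using bij_trans_monoid_pos[OF e] .
  then show "0 < k" .
  show "inj_on (state_map_code n \<circ> e) {..<k}"
    using e state_map_code_inj[OF aut]
    by (auto simp: bij_betw_def lessThan_atLeast0 intro: comp_inj_on)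
  show "\<forall>s<k. (state_map_code n \<circ> e) s < n ^ n"
    using state_map_code_less trans_monoid_lt[OF aut e_in] by simp
  show "\<forall>s<k. \<forall>t<k. foldl (pow_trans n \<delta> (n - 1)) ((state_map_code n \<circ> e) s) (ws t) =
      (state_map_code n \<circ> e) (the_inv_into {0..<k} e (tm_mult (e s) (e t)))"
    using foldl_pow_trans_state_map_code[OF aut] ws trans_monoid_lt[OF aut e_in]
      bij_trans_monoid_mult(2)[OF aut e] by simp
  show "trans_closed k k (\<lambda>i j. the_inv_into {0..<k} e (tm_mult (e i) (e j)))"
    using bij_trans_monoid_mult(1)[OF aut e] by (simp add: trans_closed_def)
qed

end

theorem proposition4p2:
  fixes S :: "('o, 'm) cart_dag"
    and n m :: nat and \<delta> :: "nat \<Rightarrow> nat \<Rightarrow> nat"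
    and k :: nat and e :: "nat \<Rightarrow> (nat \<Rightarrow> nat)"
  assumes "conway_category S"
    and "automaton n m \<delta>"
    and "Gamma S n m \<delta>"
    and "bij_betw e {0..<k} (trans_monoid n m \<delta>)"
  shows "Gamma S k k (\<lambda>i j. the_inv_into {0..<k} e (tm_mult (e i) (e j)))"
proof -
  interpret conway S by (rule conway.intro) fact
  note aut = assms(2) and e = assms(4)
  have n0: "0 < n" and m0: "0 < m" and R: "trans_closed n m \<delta>"
    using aut by (auto simp: automaton_def trans_closed_def)
  have "\<exists>w. set w \<subseteq> {0..<m} \<and> e t = word_trans n \<delta> w" if "t < k" for t
    using bij_betwE[OF e, rule_format, of t] that unfolding trans_monoid_def by auto
  then obtain ws where ws: "\<And>t. t < k \<Longrightarrow> set (ws t) \<subseteq> {0..<m} \<and> e t = word_trans n \<delta> (ws t)"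
    by metis
  have k0: "0 < k" using bij_trans_monoid_pos[OF e] .
  define P where "P = pow_trans n \<delta> (n - 1)"
  have nn: "Suc (n - 1) = n" using n0 by simp
  have "Gamma S (n ^ n) m P" and RP: "trans_closed (n ^ n) m P"
    using Gamma_pow_trans[OF assms(3) R n0 m0, of "n - 1"] pow_trans_closed[OF R n0, of "n - 1"]
    unfolding P_def nn by simp_all
  then have "Gamma S (n ^ n) k (\<lambda>I t. foldl P I (ws t))"
    using Gamma_word_letters[OF _ RP _ m0 k0] ws n0 by (simp add: atLeast0LessThan)
  then show ?thesis using Gamma_trans_monoid_subautomaton[OF aut _ e ws] by (simp add: P_def)
qed

end
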